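(* There is a constant $C$ such that for all $N\ge1$ and all $f\in L^2(\mathbb{R}\times\mathbb{T})$, $$\|e^{it\partial_x\partial_y}P_{\le N}f\|_{L^4_{t,x,y}([0,1]\times\mathbb{R}\times\mathbb{T})}\le C\Big((\log N)^{\frac14}\|f\|_{L^2(\mathbb{R}\times\mathbb{T})}+N^{\frac14}\|\widehat f(\xi,n)\|_{\ell^4_nL^2_\xi}\Big),$$ where $\|\widehat f(\xi,n)\|_{\ell^4_nL^2_\xi}=\big(\sum_{n\in\mathbb{Z}}\big(\int_{\mathbb{R}}|\widehat f(\xi,n)|^2d\xi\big)^{2}\big)^{1/4}$.
   Context: $\mathbb{T}=\mathbb{R}/\mathbb{Z}$. Fourier transform $\widehat f(\xi,n)=\int_{\mathbb{R}\times\mathbb{T}}e^{-2\pi i(\xi x+ny)}f(x,y)\,dx\,dy$, $(\xi,n)\in\mathbb{R}\times\mathbb{Z}$. $e^{it\partial_x\partial_y}$ is the propagator of $i\partial_tu+\partial_x\partial_yu=0$, i.e. the Fourier multiplier $e^{-4\pi^2 it\xi n}$. $\varphi$ is a fixed smooth radial function on $\mathbb{R}$ equal to $1$ on $|x|\le1$ and $0$ on $|x|\ge2$, and $P_{\le N}$ is the Fourier multiplier $\varphi(\xi/N)\varphi(n/N)$. *)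

theory Defs
  imports "HOL-Analysis.Analysis"
begin

(* Functions on R x T are represented as functions on R x R that are 1-periodic in the
   second variable; T = R/Z is identified with the fundamental domain [0,1). *)

definition smooth_fun :: "(real \<Rightarrow> real) \<Rightarrow> bool" where
  "smooth_fun \<phi> \<longleftrightarrow> (\<forall>k x. ((deriv ^^ k) \<phi>) differentiable (at x))"

definition in_L2_RT :: "(real \<times> real \<Rightarrow> complex) \<Rightarrow> bool" where
  "in_L2_RT f \<longleftrightarrow> f \<in> borel_measurable lebesgue \<and> (\<forall>x y. f (x, y + 1) = f (x, y)) \<and>
     (\<integral>\<^sup>+ z. indicator (UNIV \<times> {0..<1}) z * ennreal ((cmod (f z))\<^sup>2) \<partial>lebesgue) < \<infinity>"

definition L2_norm_RT :: "(real \<times> real \<Rightarrow> complex) \<Rightarrow> real" where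
  "L2_norm_RT f = sqrt (enn2real
     (\<integral>\<^sup>+ z. indicator (UNIV \<times> {0..<1}) z * ennreal ((cmod (f z))\<^sup>2) \<partial>lebesgue))"

(* Fourier transform of the truncation f * 1_{|x| <= R}, which lies in L^1(R x T). *)
definition fourier_trunc :: "(real \<times> real \<Rightarrow> complex) \<Rightarrow> real \<Rightarrow> real \<Rightarrow> int \<Rightarrow> complex" where
  "fourier_trunc f R \<xi> n =
     (LINT z : ({-R..R} \<times> {0..<1}) | lebesgue.
        exp (- (2 * pi * \<i>) * complex_of_real (\<xi> * fst z + real_of_int n * snd z)) * f z)"

(* g is (a representative of) the L^2 Fourier transform \<hat>f on R x Z, i.e. the L^2(R x Z)
   limit of the Fourier transforms of the truncations (Plancherel). *)
definition is_L2_fourier :: "(real \<times> real \<Rightarrow> complex) \<Rightarrow> (real \<Rightarrow> int \<Rightarrow> complex) \<Rightarrow> bool" where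
  "is_L2_fourier f g \<longleftrightarrow>
     (\<forall>n. (\<lambda>\<xi>. g \<xi> n) \<in> borel_measurable lebesgue) \<and>
     (\<integral>\<^sup>+ n. (\<integral>\<^sup>+ \<xi>. ennreal ((cmod (g \<xi> n))\<^sup>2) \<partial>lebesgue) \<partial>count_space UNIV) < \<infinity> \<and>
     ((\<lambda>R. \<integral>\<^sup>+ n. (\<integral>\<^sup>+ \<xi>. ennreal ((cmod (g \<xi> n - fourier_trunc f R \<xi> n))\<^sup>2) \<partial>lebesgue)
                \<partial>count_space UNIV) \<longlongrightarrow> 0) at_top"

definition l4L2_norm :: "(real \<Rightarrow> int \<Rightarrow> complex) \<Rightarrow> real" where
  "l4L2_norm g = (enn2real (\<integral>\<^sup>+ n. (\<integral>\<^sup>+ \<xi>. ennreal ((cmod (g \<xi> n))\<^sup>2) \<partial>lebesgue)\<^sup>2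
                      \<partial>count_space UNIV)) powr (1/4)"

(* (e^{it\<partial>_x\<partial>_y} P_{\<le>N} f)(t,x,y), written as the inverse Fourier transform of
   e^{-4\<pi>^2 i t \<xi> n} \<phi>(\<xi>/N) \<phi>(n/N) \<hat>f(\<xi>,n); the sum is over |n| \<le> 2N since \<phi>(n/N) = 0 otherwise. *)
definition schrod_PN :: "(real \<Rightarrow> real) \<Rightarrow> real \<Rightarrow> (real \<Rightarrow> int \<Rightarrow> complex) \<Rightarrow>
    real \<Rightarrow> real \<Rightarrow> real \<Rightarrow> complex" where
  "schrod_PN \<phi> N g t x y =
     (\<Sum>n\<in>{n::int. \<bar>real_of_int n\<bar> \<le> 2 * N}.
        (LINT \<xi> | lebesgue.
           exp ((2 * pi * \<i>) * complex_of_real (\<xi> * x + real_of_int n * y)) *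
           exp (- (4 * pi\<^sup>2 * \<i>) * complex_of_real (t * \<xi> * real_of_int n)) *
           complex_of_real (\<phi> (\<xi> / N) * \<phi> (real_of_int n / N)) * g \<xi> n))"

definition L4_pow4_TRT :: "(real \<Rightarrow> real \<Rightarrow> real \<Rightarrow> complex) \<Rightarrow> ennreal" where
  "L4_pow4_TRT u = (\<integral>\<^sup>+ w. indicator ({0..1} \<times> UNIV \<times> {0..<1}) w *
       ennreal ((cmod (u (fst w) (fst (snd w)) (snd (snd w)))) ^ 4) \<partial>lebesgue)"

end

theory Submission
  imports Defs
begin

(* The solution is a sum of transported profiles: u(t,x,y) = sum_{|n| <= 2N} e(ny) h_n(x - 2 pi t n),
   where e(s) = exp(2 pi i s) and h_n is the inverse Fourier transform of the band-limited
   coefficient xi |-> phi(xi/N) phi(n/N) f^(xi,n). For fixed (t,x), Parseval in y turns the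
   y-integral of |u|^4 into the l^2 norm of the self-convolution of a_n = h_n(x - 2 pi t n).
   The diagonal contributes sum |a_n|^4; Cauchy-Schwarz with weights |n - n'| bounds the rest by
   (log N) sum_{n ~= n'} |n - n'| |a_n|^2 |a_n'|^2, because sum 1/|n - n'| over n + n' = m is at
   most 2 (1 + ln 4N). Integrating in (t,x), the diagonal terms are bounded by
   ||h_n||_4^4 <= 4N ||f^(.,n)||_2^4 (band limitation), and the off-diagonal ones by the bilinear
   transport estimate: int_0^1 int |h_n(x - ctn)|^2 |h_n'(x - ctn')|^2 dx dt is at most
   ||h_n||_2^2 ||h_n'||_2^2 / (c |n - n'|), which cancels the weight. Summing, with
   sum_n ||f^(.,n)||_2^2 <= 2 ||f||_2^2 and Cauchy-Schwarz over the O(N) frequencies, gives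
   ||u||_4^4 <= C (log N ||f||_2^4 + N ||f^||_{l^4 L^2}^4).
   The Plancherel inequalities used are Bessel's inequality for the characters
   e(xi (k/2K + theta)) on [-K, K], averaged over the shift theta. *)

section \<open>Exponentials and orthogonality\<close>

lemma cmod_sq_cnj: "(complex_of_real (cmod z))\<^sup>2 = z * cnj z"
  using complex_norm_square[of z] by simp

definition e2pi :: "real \<Rightarrow> complex" where
  "e2pi s = exp ((2 * pi * \<i>) * complex_of_real s)"

lemma e2pi_add: "e2pi (a + b) = e2pi a * e2pi b"
  by (simp add: e2pi_def distrib_left exp_add)

lemma norm_e2pi[simp]: "cmod (e2pi s) = 1"
  unfolding e2pi_def by (simp add: norm_exp_eq_Re)

lemma cnj_e2pi: "cnj (e2pi s) = e2pi (- s)"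
  unfolding e2pi_def exp_cnj by simp

lemma e2pi_of_int: "e2pi (of_int k) = 1"
proof -
  have "exp ((2 * pi * \<i>) * complex_of_real (of_int k)) = exp (complex_of_real (2 * of_int k * pi) * \<i>)"
    by (simp add: algebra_simps)
  also have "\<dots> = 1" by (rule exp_integer_2pi) simp
  finally show ?thesis by (simp add: e2pi_def)
qed

lemma e2pi_zero[simp]: "e2pi 0 = 1" by (simp add: e2pi_def)

lemma continuous_on_e2pi[continuous_intros]:
  "continuous_on S f \<Longrightarrow> continuous_on S (\<lambda>x. e2pi (f x))"
  unfolding e2pi_def by (intro continuous_intros)

lemma borel_measurable_e2pi[measurable]: "e2pi \<in> borel_measurable borel"
  by (intro borel_measurable_continuous_onI continuous_on_e2pi continuous_on_id)

lemma has_vector_derivative_e2pi: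
  "((\<lambda>x. e2pi (c * x)) has_vector_derivative ((2 * complex_of_real pi * \<i> * complex_of_real c) * e2pi (c * x))) (at x within S)"
proof -
  have e: "e2pi (c * t) = exp (t *\<^sub>R (2 * complex_of_real pi * \<i> * complex_of_real c))" for t
    by (simp add: e2pi_def scaleR_conv_of_real algebra_simps)
  have f: "(\<lambda>x. e2pi (c * x)) = (\<lambda>t. exp (t *\<^sub>R (2 * complex_of_real pi * \<i> * complex_of_real c)))"
    by (rule ext) (rule e)
  show ?thesis unfolding f e
    using exp_scaleR_has_vector_derivative_right[where t=x and A="2 * complex_of_real pi * \<i> * complex_of_real c" and T=S]
    by (metis mult.commute)
qed

lemma integral_e2pi_Icc_period:
  assumes L: "L > 0"
  shows "(LINT x|lborel. indicator {a..a+L} x *\<^sub>R e2pi (of_int j * x / L)) = (if j = 0 then complex_of_real L else 0)"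
proof (cases "j = 0")
  case True
  then show ?thesis using L by (simp add: scaleR_conv_of_real)
next
  case False
  define c where "c = of_int j / L"
  have c0: "c \<noteq> 0" using False L by (simp add: c_def)
  have eq: "e2pi (of_int j * x / L) = e2pi (c * x)" for x by (simp add: c_def)
  have "(LINT x|lborel. indicator {a..a+L} x *\<^sub>R e2pi (c * x)) =
      inverse (2 * complex_of_real pi * \<i> * complex_of_real c) * e2pi (c * (a + L)) - inverse (2 * complex_of_real pi * \<i> * complex_of_real c) * e2pi (c * a)"
  proof (rule integral_FTC_atLeastAtMost)
    show "a \<le> a + L" using L by simp
    fix x
    show "((\<lambda>x. inverse (2 * complex_of_real pi * \<i> * complex_of_real c) * e2pi (c * x)) has_vector_derivative e2pi (c * x)) (at x within {a..a + L})"
      using has_vector_derivative_mult_right[OF has_vector_derivative_e2pi[of c x "{a..a+L}"], of "inverse (2 * complex_of_real pi * \<i> * complex_of_real c)"]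
      using c0 by (simp add: field_simps)
  next
    show "continuous_on {a..a + L} (\<lambda>x. e2pi (c * x))" by (intro continuous_intros)
  qed
  also have "e2pi (c * (a + L)) = e2pi (c * a)"
  proof -
    have "c * (a + L) = c * a + of_int j" using L by (simp add: c_def field_simps)
    then show ?thesis by (simp add: e2pi_add e2pi_of_int)
  qed
  finally show ?thesis using False eq by simp
qed

lemma integral_e2pi_Ico_period:
  assumes L: "L > 0"
  shows "(LINT x|lborel. indicator {a..<a+L} x *\<^sub>R e2pi (of_int j * x / L)) = (if j = 0 then complex_of_real L else 0)"
proof -
  have "(LINT x|lborel. indicator {a..<a+L} x *\<^sub>R e2pi (of_int j * x / L)) =
        (LINT x|lborel. indicator {a..a+L} x *\<^sub>R e2pi (of_int j * x / L))"
  proof (rule integral_cong_AE)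
    show "AE x in lborel. indicator {a..<a+L} x *\<^sub>R e2pi (of_int j * x / L) = indicator {a..a+L} x *\<^sub>R e2pi (of_int j * x / L)"
      using AE_lborel_singleton[of "a+L"] by eventually_elim (auto simp: indicator_def)
  qed measurable
  also have "\<dots> = (if j = 0 then complex_of_real L else 0)" by (rule integral_e2pi_Icc_period[OF L])
  finally show ?thesis .
qed

lemma integral_e2pi_box:
  assumes R: "R > 0"
  shows "(LINT z|lebesgue. indicator ({-R..R} \<times> {0..<1}) z *\<^sub>R e2pi (of_int a * fst z / (2*R) + of_int b * snd z))
      = (if a = 0 \<and> b = 0 then complex_of_real (2*R) else 0)"
proof -
  define f where "f z = indicator ({-R..R} \<times> {0..<1}) z *\<^sub>R e2pi (of_int a * fst z / (2*R) + of_int b * snd z)" for z :: "real \<times> real"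
  have box[measurable]: "{-R..R} \<times> {0..<1::real} \<in> sets borel" by (intro borel_Times) auto
  have cm[measurable]: "(\<lambda>z::real\<times>real. e2pi (of_int a * fst z / (2*R) + of_int b * snd z)) \<in> borel_measurable borel"
    by (intro borel_measurable_continuous_onI continuous_intros) (use R in auto)
  have fm[measurable]: "f \<in> borel_measurable borel" unfolding f_def by measurable
  have "(LINT z|lebesgue. f z) = (LINT z|lborel. f z)"
    by (rule integral_completion) simp
  also have "\<dots> = (LINT z|(lborel \<Otimes>\<^sub>M lborel). f z)" by (simp only: lborel_prod)
  also have "\<dots> = (LINT x|lborel. LINT y|lborel. f (x, y))"
  proof (rule lborel_pair.integral_fst'[symmetric])
    have "integrable lborel f"
    proof -
      have "integrable lborel (\<lambda>z. indicator ({-R..R} \<times> {0..<1}) z *\<^sub>R e2pi (of_int a * fst z / (2*R) + of_int b * snd z))"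
      proof (rule integrableI_bounded_set_indicator[where B=1])
        have "bounded ({-R..R} \<times> {0..<1::real})" by (intro bounded_Times) auto
        then show "emeasure lborel ({-R..R} \<times> {0..<1::real}) < \<infinity>" by (rule emeasure_bounded_finite)
      qed auto
      then show ?thesis by (simp add: f_def[abs_def])
    qed
    then show "integrable (lborel \<Otimes>\<^sub>M lborel) f" by (simp only: lborel_prod)
  qed
  also have "\<dots> = (LINT x|lborel. (indicator {-R..-R + 2*R} x *\<^sub>R e2pi (of_int a * x / (2*R))) *
                     (if b = 0 then 1 else 0))"
  proof (rule Bochner_Integration.integral_cong[OF refl])
    fix x
    define C where "C = indicator {-R..-R + 2*R} x *\<^sub>R e2pi (of_int a * x / (2*R))"
    have e: "f (x, y) = C * (indicator {0..<0+1} y *\<^sub>R e2pi (of_int b * y / 1))" for y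
      by (auto simp: f_def C_def indicator_def e2pi_add)
    have "(LINT y|lborel. f (x, y)) = C * (LINT y|lborel. indicator {0..<0+1} y *\<^sub>R e2pi (of_int b * y / 1))"
      by (simp only: e integral_mult_right_zero)
    also have "\<dots> = C * (if b = 0 then 1 else 0)"
      by (simp only: integral_e2pi_Ico_period[of 1 0 b] zero_less_one) simp
    finally show "(LINT y|lborel. f (x, y)) = (indicator {-R..-R + 2*R} x *\<^sub>R e2pi (of_int a * x / (2*R))) * (if b = 0 then 1 else 0)"
      by (simp add: C_def)
  qed
  also have "\<dots> = (LINT x|lborel. indicator {-R..-R + 2*R} x *\<^sub>R e2pi (of_int a * x / (2*R))) * (if b = 0 then 1 else 0)"
    by (rule integral_mult_left_zero)
  also have "\<dots> = (if a = 0 \<and> b = 0 then complex_of_real (2*R) else 0)"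
    using integral_e2pi_Icc_period[of "2*R" "-R" a] R by simp
  finally show ?thesis by (simp add: f_def)
qed

lemma integral_orthogonal_double_sum:
  fixes E :: "'i \<Rightarrow> 'a \<Rightarrow> complex" and d :: "'i \<Rightarrow> 'i \<Rightarrow> complex"
  assumes I: "finite I"
    and iEE: "\<And>j k. j \<in> I \<Longrightarrow> k \<in> I \<Longrightarrow> integrable M (\<lambda>x. E j x * cnj (E k x))"
    and orth: "\<And>j k. j \<in> I \<Longrightarrow> k \<in> I \<Longrightarrow> (LINT x|M. E j x * cnj (E k x)) = (if j = k then V else 0)"
  shows "(LINT x|M. (\<Sum>j\<in>I. \<Sum>k\<in>I. d j k * (E j x * cnj (E k x)))) = V * (\<Sum>j\<in>I. d j j)"
proof -
  have "(LINT x|M. (\<Sum>j\<in>I. \<Sum>k\<in>I. d j k * (E j x * cnj (E k x))))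
      = (\<Sum>j\<in>I. \<Sum>k\<in>I. d j k * (if j = k then V else 0))"
    using iEE orth I by (simp add: integral_sum integrable_sum)
  also have "\<dots> = V * (\<Sum>j\<in>I. d j j)"
    using I by (simp add: if_distrib sum.delta sum_distrib_left mult.commute cong: if_cong)
  finally show ?thesis .
qed

lemma bessel_inequality:
  fixes G :: "'a \<Rightarrow> complex" and E :: "'i \<Rightarrow> 'a \<Rightarrow> complex"
  assumes I: "finite I" and V: "V > 0"
    and iG: "integrable M (\<lambda>x. G x * cnj (G x))"
    and iGE: "\<And>k. k \<in> I \<Longrightarrow> integrable M (\<lambda>x. G x * cnj (E k x))"
    and iEE: "\<And>j k. j \<in> I \<Longrightarrow> k \<in> I \<Longrightarrow> integrable M (\<lambda>x. E j x * cnj (E k x))"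
    and orth: "\<And>j k. j \<in> I \<Longrightarrow> k \<in> I \<Longrightarrow>
        (LINT x|M. E j x * cnj (E k x)) = (if j = k then complex_of_real V else 0)"
  shows "(\<Sum>k\<in>I. (cmod (LINT x|M. G x * cnj (E k x)))\<^sup>2) \<le> V * (LINT x|M. (cmod (G x))\<^sup>2)"
proof -
  define c where "c k = (LINT x|M. G x * cnj (E k x))" for k
  define H where "H x = G x - (\<Sum>k\<in>I. c k * E k x) / V" for x
  define S where "S = (\<Sum>k\<in>I. (cmod (c k))\<^sup>2)"
  have iEG: "integrable M (\<lambda>x. E k x * cnj (G x))" if "k \<in> I" for k
  proof -
    have "integrable M (\<lambda>x. cnj (G x * cnj (E k x)))" using iGE[OF that] by (rule integrable_cnj)
    then show ?thesis by (simp add: mult.commute)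
  qed
  have int_EG: "(LINT x|M. E k x * cnj (G x)) = cnj (c k)" if "k \<in> I" for k
  proof -
    have "(LINT x|M. E k x * cnj (G x)) = (LINT x|M. cnj (G x * cnj (E k x)))" by (simp add: mult.commute)
    also have "\<dots> = cnj (c k)" unfolding c_def using Bochner_Integration.integral_cnj[of M "\<lambda>x. G x * cnj (E k x)"] by simp
    finally show ?thesis .
  qed
  have eq: "H x * cnj (H x) = G x * cnj (G x)
      - (\<Sum>k\<in>I. (cnj (c k) / V) * (G x * cnj (E k x)))
      - (\<Sum>k\<in>I. (c k / V) * (E k x * cnj (G x)))
      + (\<Sum>j\<in>I. \<Sum>k\<in>I. (c j * cnj (c k) / V\<^sup>2) * (E j x * cnj (E k x)))" for x
    unfolding H_def
    by (simp add: algebra_simps sum_distrib_left sum_distrib_right sum_subtractf power2_eq_square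
        sum_divide_distrib[symmetric] field_simps) (rule disjI2, rule sum.swap)
  have i1: "integrable M (\<lambda>x. \<Sum>k\<in>I. (cnj (c k) / V) * (G x * cnj (E k x)))"
    using iGE by (intro Bochner_Integration.integrable_sum Bochner_Integration.integrable_mult_right) auto
  have i2: "integrable M (\<lambda>x. \<Sum>k\<in>I. (c k / V) * (E k x * cnj (G x)))"
    using iEG by (intro Bochner_Integration.integrable_sum Bochner_Integration.integrable_mult_right) auto
  have i3: "integrable M (\<lambda>x. \<Sum>j\<in>I. \<Sum>k\<in>I. (c j * cnj (c k) / V\<^sup>2) * (E j x * cnj (E k x)))"
    using iEE by (intro Bochner_Integration.integrable_sum Bochner_Integration.integrable_mult_right) auto
  have v1: "(LINT x|M. (\<Sum>k\<in>I. (cnj (c k) / V) * (G x * cnj (E k x)))) = S / V"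
    using iGE by (simp add: integral_sum S_def sum_divide_distrib cmod_sq_cnj c_def mult.commute)
  have v2: "(LINT x|M. (\<Sum>k\<in>I. (c k / V) * (E k x * cnj (G x)))) = S / V"
    using iEG int_EG by (simp add: integral_sum S_def sum_divide_distrib cmod_sq_cnj)
  have v3: "(LINT x|M. (\<Sum>j\<in>I. \<Sum>k\<in>I. (c j * cnj (c k) / V\<^sup>2) * (E j x * cnj (E k x)))) = S / V"
  proof -
    have "(LINT x|M. (\<Sum>j\<in>I. \<Sum>k\<in>I. (c j * cnj (c k) / V\<^sup>2) * (E j x * cnj (E k x))))
        = complex_of_real V * (\<Sum>j\<in>I. c j * cnj (c j) / V\<^sup>2)"
      by (rule integral_orthogonal_double_sum[OF I iEE orth])
    also have "\<dots> = (\<Sum>j\<in>I. c j * cnj (c j)) / V"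
      using V by (simp add: sum_divide_distrib sum_distrib_left power2_eq_square)
    also have "\<dots> = S / V" by (simp add: S_def cmod_sq_cnj)
    finally show ?thesis .
  qed
  have iH: "integrable M (\<lambda>x. H x * cnj (H x))"
    unfolding eq using iG i1 i2 i3 by auto
  have "(LINT x|M. H x * cnj (H x)) = (LINT x|M. G x * cnj (G x)) - S / V"
    unfolding eq using iG i1 i2 i3 v1 v2 v3 by simp
  moreover have "(LINT x|M. G x * cnj (G x)) = complex_of_real (LINT x|M. (cmod (G x))\<^sup>2)"
    using integral_complex_of_real[of M "\<lambda>x. (cmod (G x))\<^sup>2"] by (simp add: cmod_sq_cnj)
  moreover have "0 \<le> Re (LINT x|M. H x * cnj (H x))"
  proof -
    have "Re (LINT x|M. H x * cnj (H x)) = (LINT x|M. Re (H x * cnj (H x)))"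
      using iH by (rule integral_Re[symmetric])
    also have "\<dots> \<ge> 0" by (intro Bochner_Integration.integral_nonneg) simp
    finally show ?thesis by simp
  qed
  ultimately have "S / V \<le> (LINT x|M. (cmod (G x))\<^sup>2)" by simp
  then show ?thesis using V by (simp add: S_def c_def field_simps)
qed

section \<open>Averaging over shifted lattices\<close>

lemma indicator_le_sum_indicator_cells:
  fixes L :: real and M :: nat
  assumes L: "L > 0"
  shows "indicator {- real M / L .. real M / L} x
      \<le> (\<Sum>k\<in>{- int M..int M}. (indicator {of_int k / L .. (of_int k + 1) / L} x :: ennreal))"
proof (cases "x \<in> {- real M / L .. real M / L}")
  case True
  define k where "k = \<lfloor>L * x\<rfloor>"
  have lx: "- real M \<le> L * x" "L * x \<le> real M" using True L by (auto simp: field_simps)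
  have "- int M \<le> k" "k \<le> int M" using lx unfolding k_def by (simp_all add: le_floor_iff floor_le_iff)
  then have kin: "k \<in> {- int M..int M}" by auto
  have "of_int k \<le> L * x" "L * x \<le> of_int k + 1"
    unfolding k_def using of_int_floor_le[of "L*x"] real_of_int_floor_add_one_ge[of "L*x"] by auto
  then have "x \<in> {of_int k / L .. (of_int k + 1) / L}" using L by (auto simp: field_simps)
  then have "(1::ennreal) \<le> indicator {of_int k / L .. (of_int k + 1) / L} x" by simp
  also have "\<dots> \<le> (\<Sum>k\<in>{- int M..int M}. (indicator {of_int k / L .. (of_int k + 1) / L} x :: ennreal))"
    by (rule member_le_sum[OF kin]) auto
  finally show ?thesis by (simp add: indicator_def)
qed simp

text \<open>Each cell \<open>[k/L, (k+1)/L]\<close> is a translate of \<open>[0, 1/L]\<close>, so the integral is an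
  average over \<open>\<theta>\<close> of the lattice sums.\<close>

lemma nn_integral_truncated_le_of_lattice_sums:
  fixes Q :: "real \<Rightarrow> ennreal" and L :: real and V :: ennreal and M :: nat
  assumes L: "L > 0" and Q[measurable]: "Q \<in> borel_measurable borel"
    and B: "\<And>\<theta> K. \<theta> \<in> {0..1/L} \<Longrightarrow> finite K \<Longrightarrow> (\<Sum>k\<in>K. Q (of_int k / L + \<theta>)) \<le> ennreal L * V"
  shows "(\<integral>\<^sup>+x. Q x * indicator {- real M / L .. real M / L} x \<partial>lborel) \<le> V"
proof -
  have "(\<integral>\<^sup>+x. Q x * indicator {- real M / L .. real M / L} x \<partial>lborel)
      \<le> (\<integral>\<^sup>+x. (\<Sum>k\<in>{- int M..int M}. Q x * indicator {of_int k / L .. (of_int k + 1) / L} x) \<partial>lborel)"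
    by (intro nn_integral_mono, subst sum_distrib_left[symmetric], rule mult_left_mono[OF indicator_le_sum_indicator_cells[OF L]]) simp
  also have "\<dots> = (\<Sum>k\<in>{- int M..int M}. \<integral>\<^sup>+x. Q x * indicator {of_int k / L .. (of_int k + 1) / L} x \<partial>lborel)"
    by (intro nn_integral_sum) measurable
  also have "\<dots> = (\<Sum>k\<in>{- int M..int M}. \<integral>\<^sup>+\<theta>. Q (of_int k / L + \<theta>) * indicator {0 .. 1 / L} \<theta> \<partial>lborel)"
  proof (intro sum.cong refl)
    fix k :: int
    have "(\<integral>\<^sup>+x. Q x * indicator {of_int k / L .. (of_int k + 1) / L} x \<partial>lborel)
        = ennreal \<bar>1::real\<bar> * (\<integral>\<^sup>+\<theta>. Q (of_int k / L + 1 * \<theta>) * indicator {of_int k / L .. (of_int k + 1) / L} (of_int k / L + 1 * \<theta>) \<partial>lborel)"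
      by (rule nn_integral_real_affine) auto
    also have "\<dots> = (\<integral>\<^sup>+\<theta>. Q (of_int k / L + \<theta>) * indicator {0 .. 1 / L} \<theta> \<partial>lborel)"
      using L by (simp only: abs_one ennreal_1 mult_1 mult_1_left, intro nn_integral_cong) (auto simp: indicator_def field_simps zero_le_mult_iff)
    finally show "(\<integral>\<^sup>+x. Q x * indicator {of_int k / L .. (of_int k + 1) / L} x \<partial>lborel)
        = (\<integral>\<^sup>+\<theta>. Q (of_int k / L + \<theta>) * indicator {0 .. 1 / L} \<theta> \<partial>lborel)" .
  qed
  also have "\<dots> = (\<integral>\<^sup>+\<theta>. (\<Sum>k\<in>{- int M..int M}. Q (of_int k / L + \<theta>)) * indicator {0 .. 1 / L} \<theta> \<partial>lborel)"
    by (subst nn_integral_sum[symmetric]) (measurable, simp add: sum_distrib_right)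
  also have "\<dots> \<le> (\<integral>\<^sup>+\<theta>. (ennreal L * V) * indicator {0 .. 1 / L} \<theta> \<partial>lborel)"
    by (intro nn_integral_mono) (auto simp: indicator_def intro!: B)
  also have "\<dots> = ennreal L * V * ennreal (1 / L)"
    using L by (simp add: nn_integral_cmult_indicator)
  also have "\<dots> = V"
  proof -
    have "ennreal L * V * ennreal (1 / L) = (ennreal L * ennreal (1 / L)) * V" by (simp add: ac_simps)
    also have "ennreal L * ennreal (1 / L) = 1" using L by (simp add: ennreal_mult[symmetric])
    finally show ?thesis by simp
  qed
  finally show ?thesis .
qed

lemma nn_integral_le_of_lattice_sums:
  fixes Q :: "real \<Rightarrow> ennreal" and L :: real and V :: ennreal
  assumes L: "L > 0" and Q[measurable]: "Q \<in> borel_measurable borel"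
    and B: "\<And>\<theta> K. \<theta> \<in> {0..1/L} \<Longrightarrow> finite K \<Longrightarrow> (\<Sum>k\<in>K. Q (of_int k / L + \<theta>)) \<le> ennreal L * V"
  shows "(\<integral>\<^sup>+x. Q x \<partial>lborel) \<le> V"
proof -
  have sup: "Q x = (SUP M. Q x * indicator {- real M / L .. real M / L} x)" for x
  proof (rule antisym)
    obtain M :: nat where "\<bar>L * x\<bar> \<le> real M" using real_arch_simple by blast
    then have "x \<in> {- real M / L .. real M / L}" using L by (auto simp: field_simps abs_le_iff)
    then show "Q x \<le> (SUP M. Q x * indicator {- real M / L .. real M / L} x)"
      by (intro SUP_upper2[of M]) auto
  qed (intro SUP_least, simp add: indicator_def)
  have "(\<integral>\<^sup>+x. Q x \<partial>lborel) = (\<integral>\<^sup>+x. (SUP M. Q x * indicator {- real M / L .. real M / L} x) \<partial>lborel)"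
    by (subst sup) simp
  also have "\<dots> = (SUP M. \<integral>\<^sup>+x. Q x * indicator {- real M / L .. real M / L} x \<partial>lborel)"
  proof (rule nn_integral_monotone_convergence_SUP)
    show "incseq (\<lambda>M x. Q x * indicator {- real M / L .. real M / L} x)"
      using L by (auto simp: incseq_def le_fun_def indicator_def field_simps intro!: mult_left_mono)
  qed measurable
  also have "\<dots> \<le> V" by (intro SUP_least nn_integral_truncated_le_of_lattice_sums[OF L Q B])
  finally show ?thesis .
qed

section \<open>Inverse Fourier transform of band-limited functions\<close>

lemma integrable_norm_sq:
  fixes G :: "'a \<Rightarrow> complex"
  assumes [measurable]: "G \<in> borel_measurable M" and fin: "(\<integral>\<^sup>+\<xi>. (cmod (G \<xi>))\<^sup>2 \<partial>M) < \<infinity>"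
  shows "integrable M (\<lambda>\<xi>. (cmod (G \<xi>))\<^sup>2)"
  by (rule integrableI_bounded) (use fin in auto)

lemma integrable_of_L2_finite_measure_support:
  fixes G :: "'a \<Rightarrow> complex"
  assumes [measurable]: "G \<in> borel_measurable M" and fin: "(\<integral>\<^sup>+\<xi>. (cmod (G \<xi>))\<^sup>2 \<partial>M) < \<infinity>"
    and A[measurable]: "A \<in> sets M" and Afin: "emeasure M A < \<infinity>"
    and supp: "\<And>\<xi>. \<xi> \<notin> A \<Longrightarrow> G \<xi> = 0"
  shows "integrable M G"
proof (rule Bochner_Integration.integrable_bound)
  show "integrable M (\<lambda>\<xi>. (cmod (G \<xi>))\<^sup>2 + indicator A \<xi>)"
    using integrable_norm_sq[OF assms(1,2)] Afin by (intro Bochner_Integration.integrable_add) auto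
  show "AE x in M. norm (G x) \<le> norm ((cmod (G x))\<^sup>2 + indicat_real A x)"
  proof (rule AE_I2)
    fix x show "norm (G x) \<le> norm ((cmod (G x))\<^sup>2 + indicat_real A x)"
    proof (cases "x \<in> A")
      case True
      have "0 \<le> (cmod (G x) - 1)\<^sup>2" by simp
      then have "2 * cmod (G x) \<le> (cmod (G x))\<^sup>2 + 1" by (simp add: power2_diff)
      then have "cmod (G x) \<le> (cmod (G x))\<^sup>2 + 1"
        using norm_ge_zero[of "G x"] by linarith
      then show ?thesis using True by simp
    next
      case False then show ?thesis using supp by simp
    qed
  qed
qed measurable

definition inv_fourier :: "(real \<Rightarrow> complex) \<Rightarrow> real \<Rightarrow> complex" where
  "inv_fourier G x = (LINT \<xi>|lborel. e2pi (\<xi> * x) * G \<xi>)"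

lemma borel_measurable_inv_fourier[measurable]:
  assumes [measurable]: "G \<in> borel_measurable borel"
  shows "inv_fourier G \<in> borel_measurable borel"
  unfolding inv_fourier_def[abs_def] by measurable

text \<open>On \<open>[-K, K]\<close> the characters \<open>e2pi (- \<xi> x)\<close>, \<open>x \<in> \<theta> + \<int>/(2K)\<close>, are orthogonal,
  so this is Bessel's inequality.\<close>

lemma sum_norm_inv_fourier_lattice_le:
  fixes G :: "real \<Rightarrow> complex" and K \<theta> :: real and J :: "int set"
  assumes K: "K > 0" and G[measurable]: "G \<in> borel_measurable borel"
    and supp: "\<And>\<xi>. \<xi> \<notin> {-K..K} \<Longrightarrow> G \<xi> = 0"
    and fin: "(\<integral>\<^sup>+\<xi>. (cmod (G \<xi>))\<^sup>2 \<partial>lborel) < \<infinity>" and J: "finite J"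
  shows "(\<Sum>k\<in>J. (cmod (inv_fourier G (of_int k / (2*K) + \<theta>)))\<^sup>2) \<le> 2*K * (LINT \<xi>|lborel. (cmod (G \<xi>))\<^sup>2)"
proof -
  have iG2: "integrable lborel (\<lambda>\<xi>. (cmod (G \<xi>))\<^sup>2)" by (rule integrable_norm_sq[OF _ fin]) simp
  have iG: "integrable lborel G"
    by (rule integrable_of_L2_finite_measure_support[OF _ fin, of "{-K..K}"]) (use supp K in auto)
  define E where "E x \<xi> = indicator {-K..K} \<xi> *\<^sub>R e2pi (- (\<xi> * x))" for x \<xi>
  have GE: "G \<xi> * cnj (E x \<xi>) = e2pi (\<xi> * x) * G \<xi>" for x \<xi>
    using supp[of \<xi>] by (cases "\<xi> \<in> {-K..K}") (auto simp: E_def cnj_e2pi scaleR_conv_of_real)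
  have iGG: "integrable lborel (\<lambda>\<xi>. G \<xi> * cnj (G \<xi>))"
    using complex_of_real_integrable_eq[THEN iffD2, OF iG2] by (simp add: cmod_sq_cnj)
  have iGE: "integrable lborel (\<lambda>\<xi>. G \<xi> * cnj (E x \<xi>))" for x
  proof (rule Bochner_Integration.integrable_bound[OF iG])
    show "AE \<xi> in lborel. norm (G \<xi> * cnj (E x \<xi>)) \<le> norm (G \<xi>)"
      by (auto simp: E_def norm_mult indicator_def)
  qed (simp add: E_def cnj_e2pi, measurable)
  have iEE: "integrable lborel (\<lambda>\<xi>. E x \<xi> * cnj (E y \<xi>))" for x y
  proof -
    have "integrable lborel (\<lambda>\<xi>. indicator {-K..K} \<xi> *\<^sub>R (e2pi (- (\<xi> * x)) * cnj (e2pi (- (\<xi> * y)))))"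
      by (rule integrableI_bounded_set_indicator[where B=1]) (use K in \<open>auto simp: norm_mult cnj_e2pi\<close>)
    moreover have "E x \<xi> * cnj (E y \<xi>) = indicator {-K..K} \<xi> *\<^sub>R (e2pi (- (\<xi> * x)) * cnj (e2pi (- (\<xi> * y))))" for \<xi>
      by (auto simp: E_def indicator_def)
    ultimately show ?thesis by (simp only:)
  qed
  define xs where "xs k = of_int k / (2*K) + \<theta>" for k :: int
  have orthE: "(LINT \<xi>|lborel. E (xs j) \<xi> * cnj (E (xs k) \<xi>)) = (if xs j = xs k then complex_of_real (2*K) else 0)"
    for j k
  proof -
    have "E (xs j) \<xi> * cnj (E (xs k) \<xi>) = indicator {-K..-K + 2*K} \<xi> *\<^sub>R e2pi (of_int (k - j) * \<xi> / (2*K))" for \<xi>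
    proof -
      have arg: "- (\<xi> * xs j) + \<xi> * xs k = of_int (k - j) * \<xi> / (2*K)"
        unfolding xs_def using K by (simp add: field_simps)
      have "e2pi (- (\<xi> * xs j)) * e2pi (\<xi> * xs k) = e2pi (of_int (k - j) * \<xi> / (2*K))"
        by (simp only: e2pi_add[symmetric] arg)
      then show ?thesis by (simp add: E_def cnj_e2pi indicator_def)
    qed
    then have "(LINT \<xi>|lborel. E (xs j) \<xi> * cnj (E (xs k) \<xi>)) = (if k - j = 0 then complex_of_real (2*K) else 0)"
      using integral_e2pi_Icc_period[of "2*K" "-K" "k - j"] K by simp
    moreover have "(k - j = 0) = (xs j = xs k)" unfolding xs_def using K by (auto simp: field_simps)
    ultimately show ?thesis by simp
  qed
  have "(\<Sum>x\<in>xs ` J. (cmod (LINT \<xi>|lborel. G \<xi> * cnj (E x \<xi>)))\<^sup>2) \<le> 2*K * (LINT \<xi>|lborel. (cmod (G \<xi>))\<^sup>2)"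
    by (rule bessel_inequality[OF _ _ iGG iGE iEE]) (use J K orthE in auto)
  moreover have "inj_on xs J" using K by (auto simp: inj_on_def xs_def field_simps)
  ultimately have "(\<Sum>k\<in>J. (cmod (LINT \<xi>|lborel. G \<xi> * cnj (E (xs k) \<xi>)))\<^sup>2)
      \<le> 2*K * (LINT \<xi>|lborel. (cmod (G \<xi>))\<^sup>2)"
    by (simp add: sum.reindex)
  then show ?thesis by (simp add: GE inv_fourier_def xs_def)
qed

lemma norm_inv_fourier_sq_le:
  fixes G :: "real \<Rightarrow> complex" and K :: real
  assumes K: "K > 0" and G: "G \<in> borel_measurable borel"
    and supp: "\<And>\<xi>. \<xi> \<notin> {-K..K} \<Longrightarrow> G \<xi> = 0"
    and fin: "(\<integral>\<^sup>+\<xi>. (cmod (G \<xi>))\<^sup>2 \<partial>lborel) < \<infinity>"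
  shows "(cmod (inv_fourier G x))\<^sup>2 \<le> 2*K * (LINT \<xi>|lborel. (cmod (G \<xi>))\<^sup>2)"
  using sum_norm_inv_fourier_lattice_le[OF K G supp fin, of "{0}" x] by simp

lemma nn_integral_norm_inv_fourier_sq_le:
  fixes G :: "real \<Rightarrow> complex" and K :: real
  assumes K: "K > 0" and G[measurable]: "G \<in> borel_measurable borel"
    and supp: "\<And>\<xi>. \<xi> \<notin> {-K..K} \<Longrightarrow> G \<xi> = 0"
    and fin: "(\<integral>\<^sup>+\<xi>. (cmod (G \<xi>))\<^sup>2 \<partial>lborel) < \<infinity>"
  shows "(\<integral>\<^sup>+x. (cmod (inv_fourier G x))\<^sup>2 \<partial>lborel) \<le> (\<integral>\<^sup>+\<xi>. (cmod (G \<xi>))\<^sup>2 \<partial>lborel)"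
proof (rule nn_integral_le_of_lattice_sums[of "2*K"])
  fix \<theta> :: real and J :: "int set" assume "finite J"
  have "ennreal (\<Sum>k\<in>J. (cmod (inv_fourier G (of_int k / (2*K) + \<theta>)))\<^sup>2)
      \<le> ennreal (2*K * (LINT \<xi>|lborel. (cmod (G \<xi>))\<^sup>2))"
    by (intro ennreal_leI sum_norm_inv_fourier_lattice_le[OF K G supp fin \<open>finite J\<close>])
  also have "\<dots> = ennreal (2*K) * (\<integral>\<^sup>+\<xi>. (cmod (G \<xi>))\<^sup>2 \<partial>lborel)"
    using K integrable_norm_sq[OF _ fin] by (simp add: nn_integral_eq_integral ennreal_mult)
  finally show "(\<Sum>k\<in>J. ennreal ((cmod (inv_fourier G (of_int k / (2*K) + \<theta>)))\<^sup>2))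
      \<le> ennreal (2*K) * (\<integral>\<^sup>+\<xi>. (cmod (G \<xi>))\<^sup>2 \<partial>lborel)"
    by (simp add: sum_ennreal)
qed (use K in auto)

lemma nn_integral_norm_inv_fourier_pow4_le:
  fixes G :: "real \<Rightarrow> complex" and K M :: real
  assumes K: "K > 0" and G[measurable]: "G \<in> borel_measurable borel"
    and supp: "\<And>\<xi>. \<xi> \<notin> {-K..K} \<Longrightarrow> G \<xi> = 0"
    and GM: "(\<integral>\<^sup>+\<xi>. ennreal ((cmod (G \<xi>))\<^sup>2) \<partial>lborel) \<le> ennreal M" and M: "M \<ge> 0"
  shows "(\<integral>\<^sup>+x. ennreal ((cmod (inv_fourier G x))^4) \<partial>lborel) \<le> ennreal (2 * K * M\<^sup>2)"
proof -
  let ?h = "inv_fourier G"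
  have fin: "(\<integral>\<^sup>+\<xi>. (cmod (G \<xi>))\<^sup>2 \<partial>lborel) < \<infinity>" using GM by (simp add: le_less_trans)
  have "ennreal (LINT \<xi>|lborel. (cmod (G \<xi>))\<^sup>2) \<le> ennreal M"
    using GM integrable_norm_sq[OF _ fin] by (simp add: nn_integral_eq_integral)
  then have IM: "(LINT \<xi>|lborel. (cmod (G \<xi>))\<^sup>2) \<le> M" using M by simp
  have sup: "(cmod (?h x))\<^sup>2 \<le> 2 * K * M" for x
    using norm_inv_fourier_sq_le[OF K G supp fin, of x] IM K by (smt (verit) mult_left_mono)
  have "(\<integral>\<^sup>+x. ennreal ((cmod (?h x))^4) \<partial>lborel) \<le> (\<integral>\<^sup>+x. ennreal (2 * K * M) * ennreal ((cmod (?h x))\<^sup>2) \<partial>lborel)"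
  proof (intro nn_integral_mono)
    fix x
    have "(cmod (?h x))^4 = (cmod (?h x))\<^sup>2 * (cmod (?h x))\<^sup>2" by (simp add: power4_eq_xxxx power2_eq_square)
    also have "\<dots> \<le> (2 * K * M) * (cmod (?h x))\<^sup>2" by (intro mult_right_mono sup) simp
    finally show "ennreal ((cmod (?h x))^4) \<le> ennreal (2 * K * M) * ennreal ((cmod (?h x))\<^sup>2)"
      using K M by (simp add: ennreal_mult[symmetric] ennreal_leI)
  qed
  also have "\<dots> = ennreal (2 * K * M) * (\<integral>\<^sup>+x. ennreal ((cmod (?h x))\<^sup>2) \<partial>lborel)"
    by (rule nn_integral_cmult) measurable
  also have "\<dots> \<le> ennreal (2 * K * M) * ennreal M"
    using nn_integral_norm_inv_fourier_sq_le[OF K G supp fin] GM by (intro mult_left_mono) auto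
  also have "\<dots> = ennreal (2 * K * M\<^sup>2)" using K M by (simp add: ennreal_mult[symmetric] power2_eq_square mult.assoc)
  finally show ?thesis .
qed

section \<open>Plancherel on the cylinder\<close>

lemma sigma_finite_lebesgue: "sigma_finite_measure (lebesgue :: 'a::euclidean_space measure)"
proof
  obtain A :: "'a set set" where A: "countable A" "A \<subseteq> sets lborel" "\<Union>A = space lborel"
      "\<forall>a\<in>A. emeasure lborel a \<noteq> \<infinity>"
    using sigma_finite_measure.sigma_finite_countable[OF sigma_finite_lborel] by blast
  show "\<exists>A. countable A \<and> A \<subseteq> sets (lebesgue :: 'a measure) \<and> \<Union> A = space lebesgue \<and> (\<forall>a\<in>A. emeasure lebesgue a \<noteq> \<infinity>)"
    using A by (intro exI[of _ A]) (auto simp: emeasure_completion)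
qed

lemma borel_measurable_fst_lebesgue[measurable]: "fst \<in> borel_measurable (lebesgue :: (real \<times> real) measure)"
  by (rule measurable_completion) (simp add: borel_measurable_continuous_onI continuous_on_fst continuous_on_id)

lemma borel_measurable_snd_lebesgue[measurable]: "snd \<in> borel_measurable (lebesgue :: (real \<times> real) measure)"
  by (rule measurable_completion) (simp add: borel_measurable_continuous_onI continuous_on_snd continuous_on_id)

lemma sets_lebesgue_Times[measurable]: "A \<times> B \<in> sets (lebesgue :: (real \<times> real) measure)"
  if "A \<in> sets borel" "B \<in> sets borel" for A B :: "real set"
  using borel_Times[OF that] by (auto intro: sets_completionI_sets)

lemma emeasure_lebesgue_box_finite: "emeasure (lebesgue :: (real \<times> real) measure) ({a..b} \<times> {c..<d}) < \<infinity>"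
proof -
  have "bounded ({a..b} \<times> {c..<d::real})" by (intro bounded_Times) auto
  then have "emeasure lborel ({a..b} \<times> {c..<d::real}) < \<infinity>" by (rule emeasure_bounded_finite)
  moreover have "{a..b} \<times> {c..<d::real} \<in> sets lborel" using borel_Times[of "{a..b}" "{c..<d}"] by simp
  ultimately show ?thesis by (simp add: emeasure_completion)
qed

lemma fourier_trunc_eq_inner:
  "fourier_trunc f R \<xi> n = (LINT z|lebesgue. (indicator ({-R..R} \<times> {0..<1}) z *\<^sub>R f z) *
        cnj (indicator ({-R..R} \<times> {0..<1}) z *\<^sub>R e2pi (\<xi> * fst z + of_int n * snd z)))"
  unfolding fourier_trunc_def set_lebesgue_integral_def
  by (intro Bochner_Integration.integral_cong refl)
     (auto simp: indicator_def e2pi_def exp_cnj algebra_simps)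

lemma borel_measurable_fourier_trunc[measurable]:
  assumes [measurable]: "f \<in> borel_measurable lebesgue"
  shows "(\<lambda>\<xi>. fourier_trunc f R \<xi> n) \<in> borel_measurable borel"
  unfolding fourier_trunc_eq_inner
  by (rule sigma_finite_measure.borel_measurable_lebesgue_integral[OF sigma_finite_lebesgue])
     (simp add: cnj_e2pi, measurable)

lemma integral_box_lattice_characters_orthogonal:
  fixes R \<theta> :: real and j k m n :: int
  assumes R: "R > 0"
  defines "E \<equiv> \<lambda>(\<xi>, n) z. indicator ({-R..R} \<times> {0..<1}) z *\<^sub>R e2pi (\<xi> * fst z + of_int n * snd z)"
  shows "(LINT z|lebesgue. E (of_int j / (2*R) + \<theta>, m) z * cnj (E (of_int k / (2*R) + \<theta>, n) z))
      = (if (j, m) = (k, n) then complex_of_real (2*R) else 0)"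
proof -
  have "E (of_int j / (2*R) + \<theta>, m) z * cnj (E (of_int k / (2*R) + \<theta>, n) z)
      = indicator ({-R..R} \<times> {0..<1}) z *\<^sub>R e2pi (of_int (j - k) * fst z / (2*R) + of_int (m - n) * snd z)" for z
  proof -
    have "(of_int j / (2*R) + \<theta>) * fst z + of_int m * snd z + - ((of_int k / (2*R) + \<theta>) * fst z + of_int n * snd z)
        = of_int (j - k) * fst z / (2*R) + of_int (m - n) * snd z"
      using R by (simp add: field_simps)
    then show ?thesis
      by (simp add: E_def cnj_e2pi indicator_def flip: e2pi_add)
  qed
  then show ?thesis
    using integral_e2pi_box[OF R, of "j - k" "m - n"] by simp
qed

lemma sum_norm_fourier_trunc_lattice_le:
  fixes f :: "real \<times> real \<Rightarrow> complex" and R \<theta> :: real and J S :: "int set"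
  assumes R: "R > 0" and fm[measurable]: "f \<in> borel_measurable lebesgue"
    and fin: "(\<integral>\<^sup>+z. indicator (UNIV \<times> {0..<1}) z * ennreal ((cmod (f z))\<^sup>2) \<partial>lebesgue) < \<infinity>"
    and J: "finite J" and S: "finite S"
  shows "(\<Sum>k\<in>J. \<Sum>n\<in>S. ennreal ((cmod (fourier_trunc f R (of_int k / (2*R) + \<theta>) n))\<^sup>2))
      \<le> ennreal (2*R) * (\<integral>\<^sup>+z. indicator (UNIV \<times> {0..<1}) z * ennreal ((cmod (f z))\<^sup>2) \<partial>lebesgue)"
proof -
  define B where "B = {-R..R} \<times> {0..<1::real}"
  have Bm[measurable]: "B \<in> sets lebesgue" unfolding B_def by measurable
  have Bfin: "emeasure lebesgue B < \<infinity>" unfolding B_def by (rule emeasure_lebesgue_box_finite)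
  define G where "G z = indicator B z *\<^sub>R f z" for z
  have Gm[measurable]: "G \<in> borel_measurable lebesgue" unfolding G_def by measurable
  have GV: "(\<integral>\<^sup>+z. ennreal ((cmod (G z))\<^sup>2) \<partial>lebesgue) \<le> (\<integral>\<^sup>+z. indicator (UNIV \<times> {0..<1}) z * ennreal ((cmod (f z))\<^sup>2) \<partial>lebesgue)"
    by (intro nn_integral_mono) (auto simp: G_def B_def indicator_def)
  have Gfin: "(\<integral>\<^sup>+z. ennreal ((cmod (G z))\<^sup>2) \<partial>lebesgue) < \<infinity>" using GV fin by (rule le_less_trans)
  have iG2: "integrable lebesgue (\<lambda>z. (cmod (G z))\<^sup>2)" by (rule integrable_norm_sq[OF Gm Gfin])
  have iG: "integrable lebesgue G"
    by (rule integrable_of_L2_finite_measure_support[OF Gm Gfin Bm Bfin]) (simp add: G_def)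
  have iGG: "integrable lebesgue (\<lambda>z. G z * cnj (G z))"
    using complex_of_real_integrable_eq[THEN iffD2, OF iG2] by (simp add: cmod_sq_cnj)
  define E where "E \<equiv> \<lambda>(\<xi>, n) z. indicator ({-R..R} \<times> {0..<1}) z *\<^sub>R e2pi (\<xi> * fst z + of_int n * snd z)"
  have FE: "fourier_trunc f R \<xi> n = (LINT z|lebesgue. G z * cnj (E (\<xi>, n) z))" for \<xi> n
    unfolding fourier_trunc_eq_inner G_def E_def B_def by simp
  have iGE: "integrable lebesgue (\<lambda>z. G z * cnj (E p z))" for p
  proof (rule Bochner_Integration.integrable_bound[OF iG])
    show "AE z in lebesgue. norm (G z * cnj (E p z)) \<le> norm (G z)"
      by (auto simp: E_def norm_mult indicator_def split: prod.split)
  qed (simp add: E_def cnj_e2pi split_beta, measurable)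
  have iEE: "integrable lebesgue (\<lambda>z. E p z * cnj (E q z))" for p q
  proof -
    have "integrable lebesgue (\<lambda>z. indicator B z *\<^sub>R (e2pi (fst p * fst z + of_int (snd p) * snd z) * cnj (e2pi (fst q * fst z + of_int (snd q) * snd z))))"
      by (rule integrableI_bounded_set_indicator[where B=1]) (use Bfin in \<open>auto simp: norm_mult cnj_e2pi\<close>)
    moreover have "E p z * cnj (E q z) = indicator B z *\<^sub>R (e2pi (fst p * fst z + of_int (snd p) * snd z) * cnj (e2pi (fst q * fst z + of_int (snd q) * snd z)))" for z
      by (auto simp: E_def B_def indicator_def split: prod.split)
    ultimately show ?thesis by (simp only:)
  qed
  define ps where "ps kn = (of_int (fst kn) / (2*R) + \<theta>, snd kn)" for kn :: "int \<times> int"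
  have inj: "inj_on ps (J \<times> S)" using R by (auto simp: inj_on_def ps_def field_simps)
  have "(\<Sum>p\<in>ps ` (J \<times> S). (cmod (LINT z|lebesgue. G z * cnj (E p z)))\<^sup>2) \<le> 2*R * (LINT z|lebesgue. (cmod (G z))\<^sup>2)"
  proof (rule bessel_inequality[OF _ _ iGG iGE iEE])
    fix p q assume "p \<in> ps ` (J \<times> S)" "q \<in> ps ` (J \<times> S)"
    then obtain j m k n where pq: "p = (of_int j / (2*R) + \<theta>, m)" "q = (of_int k / (2*R) + \<theta>, n)"
      by (auto simp: ps_def)
    have "(p = q) = ((j, m) = (k, n))" unfolding pq using R by (auto simp: field_simps)
    then show "(LINT z|lebesgue. E p z * cnj (E q z)) = (if p = q then complex_of_real (2*R) else 0)"
      unfolding pq E_def using integral_box_lattice_characters_orthogonal[OF R] by simp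
  qed (use R J S in auto)
  then have "(\<Sum>kn\<in>J \<times> S. (cmod (LINT z|lebesgue. G z * cnj (E (ps kn) z)))\<^sup>2) \<le> 2*R * (LINT z|lebesgue. (cmod (G z))\<^sup>2)"
    by (simp only: sum.reindex[OF inj] o_def)
  then have "(\<Sum>kn\<in>J \<times> S. (cmod (fourier_trunc f R (of_int (fst kn) / (2*R) + \<theta>) (snd kn)))\<^sup>2) \<le> 2*R * (LINT z|lebesgue. (cmod (G z))\<^sup>2)"
    by (simp add: FE ps_def)
  then have "ennreal (\<Sum>k\<in>J. \<Sum>n\<in>S. (cmod (fourier_trunc f R (of_int k / (2*R) + \<theta>) n))\<^sup>2)
      \<le> ennreal (2*R) * (\<integral>\<^sup>+z. ennreal ((cmod (G z))\<^sup>2) \<partial>lebesgue)"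
    using R iG2 by (simp add: sum.cartesian_product split_def nn_integral_eq_integral ennreal_mult[symmetric])
  also have "\<dots> \<le> ennreal (2*R) * (\<integral>\<^sup>+z. indicator (UNIV \<times> {0..<1}) z * ennreal ((cmod (f z))\<^sup>2) \<partial>lebesgue)"
    by (intro mult_left_mono GV) simp
  finally show ?thesis by (simp add: sum_ennreal sum_nonneg)
qed

lemma plancherel_fourier_trunc:
  fixes f :: "real \<times> real \<Rightarrow> complex" and R :: real and S :: "int set"
  assumes R: "R > 0" and fm[measurable]: "f \<in> borel_measurable lebesgue"
    and fin: "(\<integral>\<^sup>+z. indicator (UNIV \<times> {0..<1}) z * ennreal ((cmod (f z))\<^sup>2) \<partial>lebesgue) < \<infinity>"
    and S: "finite S"
  shows "(\<Sum>n\<in>S. \<integral>\<^sup>+\<xi>. ennreal ((cmod (fourier_trunc f R \<xi> n))\<^sup>2) \<partial>lborel)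
      \<le> (\<integral>\<^sup>+z. indicator (UNIV \<times> {0..<1}) z * ennreal ((cmod (f z))\<^sup>2) \<partial>lebesgue)"
proof -
  have "(\<integral>\<^sup>+\<xi>. (\<Sum>n\<in>S. ennreal ((cmod (fourier_trunc f R \<xi> n))\<^sup>2)) \<partial>lborel)
      \<le> (\<integral>\<^sup>+z. indicator (UNIV \<times> {0..<1}) z * ennreal ((cmod (f z))\<^sup>2) \<partial>lebesgue)"
    by (rule nn_integral_le_of_lattice_sums[of "2*R"])
       (use R sum_norm_fourier_trunc_lattice_le[OF R fm fin _ S] in auto)
  then show ?thesis by (subst nn_integral_sum[symmetric]) auto
qed

lemma cmod_sq_le_split: "(cmod a)\<^sup>2 \<le> 2 * (cmod (a - b))\<^sup>2 + 2 * (cmod b)\<^sup>2"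
proof -
  have "cmod a \<le> cmod (a - b) + cmod b" using norm_triangle_ineq[of "a - b" b] by simp
  then have "(cmod a)\<^sup>2 \<le> (cmod (a - b) + cmod b)\<^sup>2" by (intro power_mono) auto
  also have "\<dots> \<le> 2 * (cmod (a - b))\<^sup>2 + 2 * (cmod b)\<^sup>2"
    using zero_le_power2[of "cmod (a - b) - cmod b"] by (simp add: power2_sum power2_diff)
  finally show ?thesis .
qed

lemma sum_le_nn_integral_count_space:
  fixes h :: "int \<Rightarrow> ennreal"
  assumes "finite S"
  shows "(\<Sum>n\<in>S. h n) \<le> (\<integral>\<^sup>+n. h n \<partial>count_space UNIV)"
proof -
  have "(\<Sum>n\<in>S. h n) = (\<integral>\<^sup>+n. h n \<partial>count_space S)" using assms by (simp add: nn_integral_count_space_finite)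
  also have "\<dots> = (\<integral>\<^sup>+n. h n * indicator S n \<partial>count_space UNIV)" by (rule nn_integral_count_space_indicator) (simp add: NO_MATCH_def)
  also have "\<dots> \<le> (\<integral>\<^sup>+n. h n \<partial>count_space UNIV)" by (intro nn_integral_mono) (simp add: indicator_def)
  finally show ?thesis .
qed

lemma sum_L2_le_fourier_trunc_approx:
  fixes f :: "real \<times> real \<Rightarrow> complex" and g :: "real \<Rightarrow> int \<Rightarrow> complex" and R :: real
  assumes f: "in_L2_RT f" and gm[measurable]: "\<And>n. (\<lambda>\<xi>. g \<xi> n) \<in> borel_measurable lebesgue"
    and S: "finite S" and R: "R > 0"
  shows "(\<Sum>n\<in>S. \<integral>\<^sup>+\<xi>. ennreal ((cmod (g \<xi> n))\<^sup>2) \<partial>lebesgue)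
      \<le> 2 * (\<integral>\<^sup>+n. (\<integral>\<^sup>+\<xi>. ennreal ((cmod (g \<xi> n - fourier_trunc f R \<xi> n))\<^sup>2) \<partial>lebesgue) \<partial>count_space UNIV)
        + 2 * (\<integral>\<^sup>+z. indicator (UNIV \<times> {0..<1::real}) z * ennreal ((cmod (f z))\<^sup>2) \<partial>lebesgue)"
proof -
  have fm[measurable]: "f \<in> borel_measurable lebesgue" using f by (simp add: in_L2_RT_def)
  have Fm[measurable]: "(\<lambda>\<xi>. fourier_trunc f R \<xi> n) \<in> borel_measurable lebesgue" for n
    by (rule measurable_completion) (simp add: borel_measurable_fourier_trunc[OF fm])
  have "ennreal ((cmod (g \<xi> n))\<^sup>2) \<le> 2 * ennreal ((cmod (g \<xi> n - fourier_trunc f R \<xi> n))\<^sup>2)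
                         + 2 * ennreal ((cmod (fourier_trunc f R \<xi> n))\<^sup>2)" for \<xi> n
    using ennreal_leI[OF cmod_sq_le_split[of "g \<xi> n" "fourier_trunc f R \<xi> n"]]
    by (simp add: ennreal_plus ennreal_mult)
  then have "(\<Sum>n\<in>S. \<integral>\<^sup>+\<xi>. ennreal ((cmod (g \<xi> n))\<^sup>2) \<partial>lebesgue)
      \<le> (\<Sum>n\<in>S. \<integral>\<^sup>+\<xi>. 2 * ennreal ((cmod (g \<xi> n - fourier_trunc f R \<xi> n))\<^sup>2)
                         + 2 * ennreal ((cmod (fourier_trunc f R \<xi> n))\<^sup>2) \<partial>lebesgue)"
    by (intro sum_mono nn_integral_mono)
  also have "\<dots> = 2 * (\<Sum>n\<in>S. \<integral>\<^sup>+\<xi>. ennreal ((cmod (g \<xi> n - fourier_trunc f R \<xi> n))\<^sup>2) \<partial>lebesgue)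
               + 2 * (\<Sum>n\<in>S. \<integral>\<^sup>+\<xi>. ennreal ((cmod (fourier_trunc f R \<xi> n))\<^sup>2) \<partial>lebesgue)"
    by (simp add: nn_integral_add nn_integral_cmult sum.distrib sum_distrib_left)
  also have "\<dots> \<le> 2 * (\<integral>\<^sup>+n. (\<integral>\<^sup>+\<xi>. ennreal ((cmod (g \<xi> n - fourier_trunc f R \<xi> n))\<^sup>2) \<partial>lebesgue) \<partial>count_space UNIV)
        + 2 * (\<integral>\<^sup>+z. indicator (UNIV \<times> {0..<1::real}) z * ennreal ((cmod (f z))\<^sup>2) \<partial>lebesgue)"
    using plancherel_fourier_trunc[OF R fm _ S] f
    by (intro add_mono mult_left_mono sum_le_nn_integral_count_space[OF S])
      (simp_all add: in_L2_RT_def nn_integral_completion)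
  finally show ?thesis .
qed

text \<open>\<open>g\<close> is only known as the \<open>L\<^sup>2\<close> limit of the Fourier transforms of the truncations
  of \<open>f\<close>; the factor 2 is the price of comparing with them.\<close>

lemma sum_L2_fourier_le_twice_L2_norm:
  assumes f: "in_L2_RT f" and g: "is_L2_fourier f g" and S: "finite S"
  shows "(\<Sum>n\<in>S. \<integral>\<^sup>+\<xi>. ennreal ((cmod (g \<xi> n))\<^sup>2) \<partial>lebesgue)
      \<le> 2 * (\<integral>\<^sup>+z. indicator (UNIV \<times> {0..<1::real}) z * ennreal ((cmod (f z))\<^sup>2) \<partial>lebesgue)"
proof -
  define V where "V = (\<integral>\<^sup>+z. indicator (UNIV \<times> {0..<1::real}) z * ennreal ((cmod (f z))\<^sup>2) \<partial>lebesgue)"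
  define D where "D R = (\<integral>\<^sup>+n. (\<integral>\<^sup>+\<xi>. ennreal ((cmod (g \<xi> n - fourier_trunc f R \<xi> n))\<^sup>2) \<partial>lebesgue) \<partial>count_space UNIV)" for R
  have gm: "(\<lambda>\<xi>. g \<xi> n) \<in> borel_measurable lebesgue" for n
    using g unfolding is_L2_fourier_def by auto
  have Dlim: "(D \<longlongrightarrow> 0) at_top" using g unfolding is_L2_fourier_def D_def by auto
  have lim: "((\<lambda>R. 2 * D R + 2 * V) \<longlongrightarrow> 2 * 0 + 2 * V) at_top"
    by (intro tendsto_add tendsto_const ennreal_tendsto_cmult Dlim) auto
  have "(\<Sum>n\<in>S. \<integral>\<^sup>+\<xi>. ennreal ((cmod (g \<xi> n))\<^sup>2) \<partial>lebesgue) \<le> 2 * 0 + 2 * V"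
  proof (rule tendsto_le[OF trivial_limit_at_top_linorder lim tendsto_const])
    show "\<forall>\<^sub>F R in at_top. (\<Sum>n\<in>S. \<integral>\<^sup>+\<xi>. ennreal ((cmod (g \<xi> n))\<^sup>2) \<partial>lebesgue) \<le> 2 * D R + 2 * V"
      using eventually_gt_at_top[of "0::real"]
      by eventually_elim (simp add: D_def V_def sum_L2_le_fourier_trunc_approx[OF f gm S])
  qed
  then show ?thesis by (simp add: V_def)
qed

section \<open>Fourth powers of trigonometric polynomials\<close>

lemma sum_sq_le_weighted:
  fixes x w :: "'i \<Rightarrow> real"
  assumes "\<And>i. i \<in> I \<Longrightarrow> w i > 0"
  shows "(\<Sum>i\<in>I. x i)\<^sup>2 \<le> (\<Sum>i\<in>I. 1 / w i) * (\<Sum>i\<in>I. w i * (x i)\<^sup>2)"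
proof -
  have "(\<Sum>i\<in>I. x i) = (\<Sum>i\<in>I. (1 / sqrt (w i)) * (sqrt (w i) * x i))"
  proof (intro sum.cong refl)
    fix i assume "i \<in> I"
    then have "sqrt (w i) > 0" using assms by simp
    then show "x i = (1 / sqrt (w i)) * (sqrt (w i) * x i)" by (simp add: field_simps)
  qed
  then have "(\<Sum>i\<in>I. x i)\<^sup>2 = (\<Sum>i\<in>I. (1 / sqrt (w i)) * (sqrt (w i) * x i))\<^sup>2" by (simp only:)
  also have "\<dots> \<le> (\<Sum>i\<in>I. (1 / sqrt (w i))\<^sup>2) * (\<Sum>i\<in>I. (sqrt (w i) * x i)\<^sup>2)"
    by (rule Cauchy_Schwarz_ineq_sum)
  also have "\<dots> = (\<Sum>i\<in>I. 1 / w i) * (\<Sum>i\<in>I. w i * (x i)\<^sup>2)"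
    using assms by (intro arg_cong2[where f="(*)"] sum.cong refl) (simp_all add: power_divide power_mult_distrib less_imp_le)
  finally show ?thesis .
qed

lemma cmod_sum_sq_subsingleton:
  fixes z :: "'i \<Rightarrow> complex"
  assumes "\<And>i j. i \<in> I \<Longrightarrow> j \<in> I \<Longrightarrow> i = j"
  shows "(cmod (\<Sum>i\<in>I. z i))\<^sup>2 = (\<Sum>i\<in>I. (cmod (z i))\<^sup>2)"
proof (cases "I = {}")
  case False
  then obtain i where "i \<in> I" by blast
  with assms have "I = {i}" by blast
  then show ?thesis by simp
qed simp

definition self_conv :: "int set \<Rightarrow> (int \<Rightarrow> complex) \<Rightarrow> int \<Rightarrow> complex" where
  "self_conv S a m = (\<Sum>p\<in>{p\<in>S\<times>S. fst p + snd p = m}. a (fst p) * a (snd p))"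

text \<open>Cauchy-Schwarz with weights \<open>\<bar>n - n'\<bar>\<close> on the off-diagonal part; the weights are
  cancelled later by the bilinear transport estimate.\<close>

lemma norm_self_conv_sq_le:
  fixes S :: "int set" and a :: "int \<Rightarrow> complex" and W :: real
  assumes S: "finite S"
    and W: "(\<Sum>p\<in>{p\<in>S\<times>S. fst p + snd p = m \<and> fst p \<noteq> snd p}. 1 / real_of_int \<bar>fst p - snd p\<bar>) \<le> W"
  shows "(cmod (self_conv S a m))\<^sup>2 \<le> 2 * (\<Sum>p\<in>{p\<in>S\<times>S. fst p + snd p = m \<and> fst p = snd p}. (cmod (a (fst p)))^4)
     + 2 * W * (\<Sum>p\<in>{p\<in>S\<times>S. fst p + snd p = m \<and> fst p \<noteq> snd p}.
                  real_of_int \<bar>fst p - snd p\<bar> * (cmod (a (fst p)))\<^sup>2 * (cmod (a (snd p)))\<^sup>2)"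
    (is "_ \<le> 2 * (\<Sum>p\<in>?D. _) + 2 * W * (\<Sum>p\<in>?O. ?v p)")
proof -
  define c where "c p = a (fst p) * a (snd p)" for p
  have fin: "finite ?D" "finite ?O" using S by (auto intro: finite_subset[of _ "S\<times>S"])
  have "{p\<in>S\<times>S. fst p + snd p = m} = ?D \<union> ?O" by auto
  then have split: "self_conv S a m = sum c ?D + sum c ?O"
    using fin unfolding self_conv_def c_def by (subst sum.union_disjoint[symmetric]) auto
  have diag: "(cmod (sum c ?D))\<^sup>2 = (\<Sum>p\<in>?D. (cmod (a (fst p)))^4)"
  proof -
    have "(cmod (sum c ?D))\<^sup>2 = (\<Sum>p\<in>?D. (cmod (c p))\<^sup>2)"
      by (rule cmod_sum_sq_subsingleton) (auto simp: prod_eq_iff)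
    also have "\<dots> = (\<Sum>p\<in>?D. (cmod (a (fst p)))^4)"
      by (intro sum.cong refl) (auto simp: c_def norm_mult power2_eq_square power4_eq_xxxx)
    finally show ?thesis .
  qed
  have offdiag: "(cmod (sum c ?O))\<^sup>2 \<le> W * (\<Sum>p\<in>?O. ?v p)"
  proof -
    have "(cmod (sum c ?O))\<^sup>2 \<le> (\<Sum>p\<in>?O. cmod (c p))\<^sup>2"
      by (intro power_mono norm_sum) simp
    also have "\<dots> \<le> (\<Sum>p\<in>?O. 1 / real_of_int \<bar>fst p - snd p\<bar>) * (\<Sum>p\<in>?O. real_of_int \<bar>fst p - snd p\<bar> * (cmod (c p))\<^sup>2)"
      by (rule sum_sq_le_weighted) auto
    also have "(\<Sum>p\<in>?O. real_of_int \<bar>fst p - snd p\<bar> * (cmod (c p))\<^sup>2) = (\<Sum>p\<in>?O. ?v p)"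
      by (simp add: c_def norm_mult power_mult_distrib mult.assoc)
    also have "(\<Sum>p\<in>?O. 1 / real_of_int \<bar>fst p - snd p\<bar>) * (\<Sum>p\<in>?O. ?v p) \<le> W * (\<Sum>p\<in>?O. ?v p)"
      by (intro mult_right_mono W sum_nonneg) simp
    finally show ?thesis .
  qed
  have "(cmod (self_conv S a m))\<^sup>2 \<le> 2 * (cmod (sum c ?D))\<^sup>2 + 2 * (cmod (sum c ?O))\<^sup>2"
    using cmod_sq_le_split[of "self_conv S a m" "sum c ?O"] by (simp add: split)
  then show ?thesis using diag offdiag by linarith
qed

lemma sum_norm_self_conv_sq_le:
  fixes S :: "int set" and a :: "int \<Rightarrow> complex" and W :: real
  assumes S: "finite S"
    and W: "\<And>m. (\<Sum>p\<in>{p\<in>S\<times>S. fst p + snd p = m \<and> fst p \<noteq> snd p}. 1 / real_of_int \<bar>fst p - snd p\<bar>) \<le> W"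
  shows "(\<Sum>m\<in>(\<lambda>p. fst p + snd p) ` (S\<times>S). (cmod (self_conv S a m))\<^sup>2)
     \<le> 2 * (\<Sum>n\<in>S. (cmod (a n))^4) + 2 * W * (\<Sum>p\<in>{p\<in>S\<times>S. fst p \<noteq> snd p}.
                  real_of_int \<bar>fst p - snd p\<bar> * (cmod (a (fst p)))\<^sup>2 * (cmod (a (snd p)))\<^sup>2)"
proof -
  define T where "T = (\<lambda>p. fst p + snd p) ` (S\<times>S)"
  have T: "finite T" using S by (simp add: T_def)
  have group: "(\<Sum>m\<in>T. \<Sum>p\<in>{p\<in>S\<times>S. fst p + snd p = m \<and> P p}. F p) = (\<Sum>p\<in>{p\<in>S\<times>S. P p}. F p)"
    for P :: "int \<times> int \<Rightarrow> bool" and F :: "int \<times> int \<Rightarrow> real"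
  proof -
    have "(\<Sum>m\<in>T. \<Sum>p\<in>{p\<in>S\<times>S. fst p + snd p = m \<and> P p}. F p)
        = (\<Sum>m\<in>T. \<Sum>p\<in>{p\<in>{p\<in>S\<times>S. P p}. fst p + snd p = m}. F p)"
      by (intro sum.cong) auto
    also have "\<dots> = (\<Sum>p\<in>{p\<in>S\<times>S. P p}. F p)"
      by (rule sum.group[OF _ T]) (use S in \<open>auto simp: T_def\<close>)
    finally show ?thesis .
  qed
  have "(\<Sum>p\<in>{p\<in>S\<times>S. fst p = snd p}. (cmod (a (fst p)))^4) = (\<Sum>n\<in>S. (cmod (a n))^4)"
  proof -
    have "{p\<in>S\<times>S. fst p = snd p} = (\<lambda>n. (n, n)) ` S" by auto
    then show ?thesis by (simp add: sum.reindex inj_on_def)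
  qed
  moreover have "(\<Sum>m\<in>T. (cmod (self_conv S a m))\<^sup>2)
      \<le> (\<Sum>m\<in>T. 2 * (\<Sum>p\<in>{p\<in>S\<times>S. fst p + snd p = m \<and> fst p = snd p}. (cmod (a (fst p)))^4)
        + 2 * W * (\<Sum>p\<in>{p\<in>S\<times>S. fst p + snd p = m \<and> fst p \<noteq> snd p}.
                  real_of_int \<bar>fst p - snd p\<bar> * (cmod (a (fst p)))\<^sup>2 * (cmod (a (snd p)))\<^sup>2))"
    by (intro sum_mono norm_self_conv_sq_le[OF S W])
  ultimately show ?thesis
    by (simp add: T_def[symmetric] sum.distrib sum_distrib_left[symmetric] group)
qed

lemma parseval_trig_poly:
  fixes T :: "int set" and b :: "int \<Rightarrow> complex"
  assumes T: "finite T"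
  shows "(\<integral>\<^sup>+y. indicator {0..<1} y * ennreal ((cmod (\<Sum>m\<in>T. e2pi (of_int m * y) * b m))\<^sup>2) \<partial>lborel)
     = ennreal (\<Sum>m\<in>T. (cmod (b m))\<^sup>2)"
proof -
  define Q where "Q y = (\<Sum>m\<in>T. e2pi (of_int m * y) * b m)" for y
  define E where "E m y = indicator {0..<1::real} y *\<^sub>R e2pi (of_int m * y)" for m :: int and y
  have Qm[measurable]: "Q \<in> borel_measurable borel"
    unfolding Q_def by (intro borel_measurable_continuous_onI continuous_intros)
  have EE: "E m y * cnj (E m' y) = indicator {0..<0+1::real} y *\<^sub>R e2pi (of_int (m - m') * y / 1)" for m m' y
    by (simp add: E_def indicator_def cnj_e2pi algebra_simps flip: e2pi_add)
  have iEE: "integrable lborel (\<lambda>y. E m y * cnj (E m' y))" for m m'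
    unfolding EE by (rule integrableI_bounded_set_indicator[where B=1]) auto
  have orth: "(LINT y|lborel. E m y * cnj (E m' y)) = (if m = m' then 1 else 0)" for m m'
    unfolding EE using integral_e2pi_Ico_period[OF zero_less_one, of 0 "m - m'"] by simp
  have pt: "complex_of_real (indicator {0..<1::real} y *\<^sub>R (cmod (Q y))\<^sup>2)
      = (\<Sum>m\<in>T. \<Sum>m'\<in>T. (b m * cnj (b m')) * (E m y * cnj (E m' y)))" for y
  proof -
    have "complex_of_real ((cmod (Q y))\<^sup>2) = Q y * cnj (Q y)" by (simp add: cmod_sq_cnj)
    also have "\<dots> = (\<Sum>m\<in>T. \<Sum>m'\<in>T. (b m * cnj (b m')) * (e2pi (of_int m * y) * cnj (e2pi (of_int m' * y))))"
      unfolding Q_def by (simp add: sum_distrib_left sum_distrib_right algebra_simps) (rule sum.swap)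
    finally show ?thesis by (simp add: E_def indicator_def)
  qed
  have "complex_of_real (LINT y|lborel. indicator {0..<1::real} y *\<^sub>R (cmod (Q y))\<^sup>2)
      = (CLINT y|lborel. (\<Sum>m\<in>T. \<Sum>m'\<in>T. (b m * cnj (b m')) * (E m y * cnj (E m' y))))"
    by (simp only: integral_complex_of_real[symmetric] pt)
  also have "\<dots> = complex_of_real (\<Sum>m\<in>T. (cmod (b m))\<^sup>2)"
    by (simp add: integral_orthogonal_double_sum[OF T iEE orth] cmod_sq_cnj)
  finally have int: "(LINT y|lborel. indicator {0..<1::real} y *\<^sub>R (cmod (Q y))\<^sup>2) = (\<Sum>m\<in>T. (cmod (b m))\<^sup>2)"
    by (simp only: of_real_eq_iff)
  have Qb: "(cmod (Q y))\<^sup>2 \<le> (\<Sum>m\<in>T. cmod (b m))\<^sup>2" for y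
    unfolding Q_def by (intro power_mono order_trans[OF norm_sum]) (simp_all add: norm_mult)
  have iQ: "integrable lborel (\<lambda>y. indicator {0..<1::real} y *\<^sub>R (cmod (Q y))\<^sup>2)"
    by (rule integrableI_bounded_set_indicator[where B="(\<Sum>m\<in>T. cmod (b m))\<^sup>2"]) (use Qb in auto)
  have "(\<integral>\<^sup>+y. indicator {0..<1} y * ennreal ((cmod (Q y))\<^sup>2) \<partial>lborel)
      = (\<integral>\<^sup>+y. ennreal (indicator {0..<1::real} y *\<^sub>R (cmod (Q y))\<^sup>2) \<partial>lborel)"
    by (intro nn_integral_cong) (simp add: indicator_def)
  also have "\<dots> = ennreal (LINT y|lborel. indicator {0..<1::real} y *\<^sub>R (cmod (Q y))\<^sup>2)"
    by (rule nn_integral_eq_integral[OF iQ]) simp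
  also have "\<dots> = ennreal (\<Sum>m\<in>T. (cmod (b m))\<^sup>2)" by (simp only: int)
  finally show ?thesis by (simp add: Q_def)
qed

lemma trig_poly_square:
  fixes S :: "int set" and a :: "int \<Rightarrow> complex"
  assumes S: "finite S"
  shows "(\<Sum>n\<in>S. e2pi (of_int n * y) * a n)\<^sup>2
      = (\<Sum>m\<in>(\<lambda>p. fst p + snd p) ` (S\<times>S). e2pi (of_int m * y) * self_conv S a m)"
proof -
  have "(\<Sum>n\<in>S. e2pi (of_int n * y) * a n)\<^sup>2 = (\<Sum>p\<in>S\<times>S. e2pi (of_int (fst p + snd p) * y) * (a (fst p) * a (snd p)))"
    by (simp add: power2_eq_square sum_product sum.cartesian_product split_def e2pi_add[symmetric] algebra_simps)
  also have "\<dots> = (\<Sum>m\<in>(\<lambda>p. fst p + snd p) ` (S\<times>S). \<Sum>p\<in>{p\<in>S\<times>S. fst p + snd p = m}. e2pi (of_int (fst p + snd p) * y) * (a (fst p) * a (snd p)))"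
    by (rule sum.group[symmetric]) (use S in auto)
  also have "\<dots> = (\<Sum>m\<in>(\<lambda>p. fst p + snd p) ` (S\<times>S). e2pi (of_int m * y) * self_conv S a m)"
    by (intro sum.cong refl) (auto simp: self_conv_def sum_distrib_left)
  finally show ?thesis .
qed

lemma L4_trig_poly_le:
  fixes S :: "int set" and a :: "int \<Rightarrow> complex" and W :: real
  assumes S: "finite S" and W0: "W \<ge> 0"
    and W: "\<And>m. (\<Sum>p\<in>{p\<in>S\<times>S. fst p + snd p = m \<and> fst p \<noteq> snd p}. 1 / real_of_int \<bar>fst p - snd p\<bar>) \<le> W"
  shows "(\<integral>\<^sup>+y. indicator {0..<1} y * ennreal ((cmod (\<Sum>n\<in>S. e2pi (of_int n * y) * a n))^4) \<partial>lborel)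
     \<le> 2 * (\<Sum>n\<in>S. ennreal ((cmod (a n))^4))
       + (\<Sum>p\<in>{p\<in>S\<times>S. fst p \<noteq> snd p}. ennreal (2 * W * real_of_int \<bar>fst p - snd p\<bar>)
            * (ennreal ((cmod (a (fst p)))\<^sup>2) * ennreal ((cmod (a (snd p)))\<^sup>2)))"
proof -
  define T where "T = (\<lambda>p. fst p + snd p) ` (S\<times>S)"
  have T: "finite T" using S by (simp add: T_def)
  have "(cmod (\<Sum>n\<in>S. e2pi (of_int n * y) * a n))^4 = (cmod (\<Sum>m\<in>T. e2pi (of_int m * y) * self_conv S a m))\<^sup>2" for y
    by (simp add: trig_poly_square[OF S, symmetric] T_def norm_power power_mult[symmetric])
  then have "(\<integral>\<^sup>+y. indicator {0..<1} y * ennreal ((cmod (\<Sum>n\<in>S. e2pi (of_int n * y) * a n))^4) \<partial>lborel)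
      = ennreal (\<Sum>m\<in>T. (cmod (self_conv S a m))\<^sup>2)"
    by (simp add: parseval_trig_poly[OF T])
  also have "\<dots> \<le> ennreal (2 * (\<Sum>n\<in>S. (cmod (a n))^4) + (\<Sum>p\<in>{p\<in>S\<times>S. fst p \<noteq> snd p}.
                 2 * W * real_of_int \<bar>fst p - snd p\<bar> * ((cmod (a (fst p)))\<^sup>2 * (cmod (a (snd p)))\<^sup>2)))"
    using sum_norm_self_conv_sq_le[OF S W, of a]
    unfolding T_def by (intro ennreal_leI) (simp add: sum_distrib_left mult.assoc)
  also have "\<dots> = 2 * (\<Sum>n\<in>S. ennreal ((cmod (a n))^4))
       + (\<Sum>p\<in>{p\<in>S\<times>S. fst p \<noteq> snd p}. ennreal (2 * W * real_of_int \<bar>fst p - snd p\<bar>)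
            * (ennreal ((cmod (a (fst p)))\<^sup>2) * ennreal ((cmod (a (snd p)))\<^sup>2)))"
    using W0 by (simp add: ennreal_plus sum_nonneg sum_ennreal ennreal_mult flip: sum_ennreal)
  finally show ?thesis .
qed

lemma harm_le_1_plus_ln: "n \<ge> 1 \<Longrightarrow> harm n \<le> 1 + ln (real n)"
proof (induction n rule: dec_induct)
  case (step n)
  have n: "real n \<ge> 1" using step by simp
  have "ln (real n / real (Suc n)) \<le> real n / real (Suc n) - 1"
    by (rule ln_le_minus_one) (use n in simp)
  also have "\<dots> = - inverse (real (Suc n))" by (simp add: field_simps)
  finally have "inverse (real (Suc n)) \<le> ln (real (Suc n)) - ln (real n)"
    using n by (simp add: ln_div)
  then show ?case using step by (simp add: harm_Suc)
qed (simp add: harm_def)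

lemma sum_inverse_abs_int_le:
  fixes K :: nat assumes K: "K \<ge> 1"
  shows "(\<Sum>d\<in>{d::int. d \<noteq> 0 \<and> \<bar>d\<bar> \<le> int K}. 1 / real_of_int \<bar>d\<bar>) \<le> 2 * (1 + ln (real K))"
proof -
  have eq: "{d::int. d \<noteq> 0 \<and> \<bar>d\<bar> \<le> int K} = int ` {1..K} \<union> (\<lambda>j. - int j) ` {1..K}"
  proof (intro set_eqI iffI)
    fix d :: int assume d: "d \<in> {d::int. d \<noteq> 0 \<and> \<bar>d\<bar> \<le> int K}"
    show "d \<in> int ` {1..K} \<union> (\<lambda>j. - int j) ` {1..K}"
    proof (cases "d > 0")
      case True then show ?thesis using d by (auto intro!: image_eqI[of _ _ "nat d"])
    next
      case False then show ?thesis using d by (auto intro!: image_eqI[of _ _ "nat (- d)"])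
    qed
  qed auto
  have "(\<Sum>d\<in>{d::int. d \<noteq> 0 \<and> \<bar>d\<bar> \<le> int K}. 1 / real_of_int \<bar>d\<bar>)
      = (\<Sum>d\<in>int ` {1..K}. 1 / real_of_int \<bar>d\<bar>) + (\<Sum>d\<in>(\<lambda>j. - int j) ` {1..K}. 1 / real_of_int \<bar>d\<bar>)"
    unfolding eq by (rule sum.union_disjoint) auto
  also have "\<dots> = 2 * harm K"
    by (simp add: sum.reindex inj_on_def harm_def divide_inverse)
  also have "\<dots> \<le> 2 * (1 + ln (real K))" using harm_le_1_plus_ln[OF K] by simp
  finally show ?thesis .
qed

lemma sum_inverse_gap_le:
  fixes N :: real assumes N: "N \<ge> 1"
  defines "S \<equiv> {n::int. \<bar>real_of_int n\<bar> \<le> 2 * N}"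
  shows "(\<Sum>p\<in>{p\<in>S\<times>S. fst p + snd p = m \<and> fst p \<noteq> snd p}. 1 / real_of_int \<bar>fst p - snd p\<bar>) \<le> 2 * (1 + ln (4 * N))"
proof -
  define K where "K = nat \<lfloor>4 * N\<rfloor>"
  have K1: "K \<ge> 1" using N by (simp add: K_def le_nat_iff le_floor_iff)
  have KN: "real K \<le> 4 * N" using N by (simp add: K_def)
  define P where "P = {p\<in>S\<times>S. fst p + snd p = m \<and> fst p \<noteq> snd p}"
  have inj: "inj_on (\<lambda>p. fst p - snd p) P"
    by (auto simp: inj_on_def P_def prod_eq_iff)
  have sub: "(\<lambda>p. fst p - snd p) ` P \<subseteq> {d::int. d \<noteq> 0 \<and> \<bar>d\<bar> \<le> int K}"
  proof safe
    fix p1 p2 assume "(p1, p2) \<in> P"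
    then have "\<bar>real_of_int p1\<bar> \<le> 2 * N" "\<bar>real_of_int p2\<bar> \<le> 2 * N" "p1 \<noteq> p2" by (auto simp: P_def S_def)
    then have "real_of_int \<bar>p1 - p2\<bar> \<le> 4 * N" by linarith
    then have "\<bar>p1 - p2\<bar> \<le> \<lfloor>4 * N\<rfloor>" by (simp add: le_floor_iff)
    then show "\<bar>fst (p1, p2) - snd (p1, p2)\<bar> \<le> int K" using N by (simp add: K_def)
    show "fst (p1, p2) - snd (p1, p2) = 0 \<Longrightarrow> False" using \<open>p1 \<noteq> p2\<close> by simp
  qed
  have finK: "finite {d::int. d \<noteq> 0 \<and> \<bar>d\<bar> \<le> int K}"
    by (rule finite_subset[of _ "{- int K..int K}"]) auto
  have "(\<Sum>p\<in>P. 1 / real_of_int \<bar>fst p - snd p\<bar>) = (\<Sum>d\<in>(\<lambda>p. fst p - snd p) ` P. 1 / real_of_int \<bar>d\<bar>)"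
    by (simp add: sum.reindex[OF inj])
  also have "\<dots> \<le> (\<Sum>d\<in>{d::int. d \<noteq> 0 \<and> \<bar>d\<bar> \<le> int K}. 1 / real_of_int \<bar>d\<bar>)"
    by (rule sum_mono2[OF finK sub]) simp
  also have "\<dots> \<le> 2 * (1 + ln (real K))" by (rule sum_inverse_abs_int_le[OF K1])
  also have "\<dots> \<le> 2 * (1 + ln (4 * N))" using K1 KN by simp
  finally show ?thesis by (simp add: P_def)
qed

section \<open>Transport\<close>

lemma nn_integral_lborel_shift_scaled:
  fixes Q :: "real \<Rightarrow> ennreal" and D :: real
  assumes [measurable]: "Q \<in> borel_measurable borel" and D: "D \<noteq> 0"
  shows "(\<integral>\<^sup>+t. Q (x + t * D) \<partial>lborel) = ennreal (1 / \<bar>D\<bar>) * (\<integral>\<^sup>+y. Q y \<partial>lborel)"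
proof -
  have "(\<integral>\<^sup>+y. Q y \<partial>lborel) = ennreal \<bar>D\<bar> * (\<integral>\<^sup>+t. Q (x + D * t) \<partial>lborel)"
    by (rule nn_integral_real_affine[OF _ D]) simp
  then have "ennreal (1 / \<bar>D\<bar>) * (\<integral>\<^sup>+y. Q y \<partial>lborel) = (ennreal (1 / \<bar>D\<bar>) * ennreal \<bar>D\<bar>) * (\<integral>\<^sup>+t. Q (x + D * t) \<partial>lborel)"
    by (simp add: mult.assoc)
  also have "ennreal (1 / \<bar>D\<bar>) * ennreal \<bar>D\<bar> = 1" using D by (simp add: ennreal_mult[symmetric])
  finally show ?thesis by (simp add: mult.commute)
qed

lemma nn_integral_lborel_translate:
  fixes Q :: "real \<Rightarrow> ennreal"
  assumes [measurable]: "Q \<in> borel_measurable borel"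
  shows "(\<integral>\<^sup>+x. Q (x - s) \<partial>lborel) = (\<integral>\<^sup>+x. Q x \<partial>lborel)"
proof -
  have "(\<integral>\<^sup>+x. Q (x - s) \<partial>lborel) = ennreal \<bar>1::real\<bar> * (\<integral>\<^sup>+x. Q ((s + 1 * x) - s) \<partial>lborel)"
    by (rule nn_integral_real_affine) auto
  then show ?thesis by simp
qed

text \<open>After Fubini the \<open>t\<close>-integral comes first, and the relative displacement \<open>c t (n\<^sub>1 - n\<^sub>2)\<close>
  sweeps the line at speed \<open>c \<bar>n\<^sub>1 - n\<^sub>2\<bar>\<close>.\<close>

lemma bilinear_transport_estimate:
  fixes P Q :: "real \<Rightarrow> ennreal" and c :: real and n1 n2 :: int
  assumes [measurable]: "P \<in> borel_measurable borel" "Q \<in> borel_measurable borel"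
    and c: "c > 0" and n: "n1 \<noteq> n2"
  shows "(\<integral>\<^sup>+t. indicator {0..1} t * (\<integral>\<^sup>+x. P (x - c * t * of_int n1) * Q (x - c * t * of_int n2) \<partial>lborel) \<partial>lborel)
     \<le> ennreal (1 / (c * \<bar>of_int n1 - of_int n2\<bar>)) * (\<integral>\<^sup>+x. P x \<partial>lborel) * (\<integral>\<^sup>+x. Q x \<partial>lborel)"
proof -
  define D where "D = c * (of_int n1 - of_int n2)"
  have D: "D \<noteq> 0" using c n by (simp add: D_def)
  have inner: "(\<integral>\<^sup>+x. P (x - c * t * of_int n1) * Q (x - c * t * of_int n2) \<partial>lborel)
      = (\<integral>\<^sup>+x. P x * Q (x + t * D) \<partial>lborel)" for t
  proof -
    have "(\<integral>\<^sup>+x. P (x - c * t * of_int n1) * Q (x - c * t * of_int n2) \<partial>lborel)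
        = ennreal \<bar>1::real\<bar> * (\<integral>\<^sup>+x. P ((c * t * of_int n1 + 1 * x) - c * t * of_int n1) * Q ((c * t * of_int n1 + 1 * x) - c * t * of_int n2) \<partial>lborel)"
      by (rule nn_integral_real_affine) auto
    also have "\<dots> = (\<integral>\<^sup>+x. P x * Q (x + t * D) \<partial>lborel)"
      by (simp add: D_def algebra_simps)
    finally show ?thesis .
  qed
  have "(\<integral>\<^sup>+t. indicator {0..1} t * (\<integral>\<^sup>+x. P (x - c * t * of_int n1) * Q (x - c * t * of_int n2) \<partial>lborel) \<partial>lborel)
      = (\<integral>\<^sup>+t. (\<integral>\<^sup>+x. indicator {0..1} t * (P x * Q (x + t * D)) \<partial>lborel) \<partial>lborel)"
    unfolding inner by (intro nn_integral_cong) (simp add: nn_integral_cmult)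
  also have "\<dots> = (\<integral>\<^sup>+x. (\<integral>\<^sup>+t. indicator {0..1} t * (P x * Q (x + t * D)) \<partial>lborel) \<partial>lborel)"
    by (rule lborel_pair.Fubini') measurable
  also have "\<dots> = (\<integral>\<^sup>+x. P x * (\<integral>\<^sup>+t. indicator {0..1} t * Q (x + t * D) \<partial>lborel) \<partial>lborel)"
    by (intro nn_integral_cong) (simp add: nn_integral_cmult[symmetric] ac_simps)
  also have "\<dots> \<le> (\<integral>\<^sup>+x. P x * (ennreal (1 / \<bar>D\<bar>) * (\<integral>\<^sup>+y. Q y \<partial>lborel)) \<partial>lborel)"
  proof (intro nn_integral_mono mult_left_mono)
    fix x
    have "(\<integral>\<^sup>+t. indicator {0..1} t * Q (x + t * D) \<partial>lborel) \<le> (\<integral>\<^sup>+t. Q (x + t * D) \<partial>lborel)"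
      by (intro nn_integral_mono) (simp add: indicator_def)
    then show "(\<integral>\<^sup>+t. indicator {0..1} t * Q (x + t * D) \<partial>lborel) \<le> ennreal (1 / \<bar>D\<bar>) * (\<integral>\<^sup>+y. Q y \<partial>lborel)"
      by (simp add: nn_integral_lborel_shift_scaled[OF _ D])
  qed simp
  also have "\<dots> = ennreal (1 / \<bar>D\<bar>) * (\<integral>\<^sup>+x. P x \<partial>lborel) * (\<integral>\<^sup>+y. Q y \<partial>lborel)"
    by (simp add: nn_integral_multc ac_simps)
  finally show ?thesis using c by (simp add: D_def abs_mult)
qed

lemma L4_transport_sum_fixed_time_le:
  fixes h :: "int \<Rightarrow> real \<Rightarrow> complex" and S :: "int set" and c t W :: real and Q :: "int \<Rightarrow> real"
  assumes S: "finite S" and W0: "W \<ge> 0"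
    and W: "\<And>m. (\<Sum>p\<in>{p\<in>S\<times>S. fst p + snd p = m \<and> fst p \<noteq> snd p}. 1 / real_of_int \<bar>fst p - snd p\<bar>) \<le> W"
    and hm[measurable]: "\<And>n. h n \<in> borel_measurable borel"
    and L4: "\<And>n. n \<in> S \<Longrightarrow> (\<integral>\<^sup>+x. ennreal ((cmod (h n x))^4) \<partial>lborel) \<le> ennreal (Q n)"
  shows "(\<integral>\<^sup>+x. (\<integral>\<^sup>+y. indicator {0..<1} y *
            ennreal ((cmod (\<Sum>n\<in>S. e2pi (of_int n * y) * h n (x - c * t * of_int n)))^4) \<partial>lborel) \<partial>lborel)
      \<le> 2 * (\<Sum>n\<in>S. ennreal (Q n))
        + (\<Sum>p\<in>{p\<in>S\<times>S. fst p \<noteq> snd p}. ennreal (2 * W * real_of_int \<bar>fst p - snd p\<bar>) *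
             (\<integral>\<^sup>+x. ennreal ((cmod (h (fst p) (x - c * t * of_int (fst p))))\<^sup>2) *
                    ennreal ((cmod (h (snd p) (x - c * t * of_int (snd p))))\<^sup>2) \<partial>lborel))"
proof -
  let ?a = "\<lambda>x n. h n (x - c * t * of_int n)"
  have translate: "(\<integral>\<^sup>+x. ennreal ((cmod (?a x n))^4) \<partial>lborel) = (\<integral>\<^sup>+x. ennreal ((cmod (h n x))^4) \<partial>lborel)" for n
    by (rule nn_integral_lborel_translate[where Q="\<lambda>x. ennreal ((cmod (h n x))^4)"]) measurable
  have "(\<integral>\<^sup>+x. (\<integral>\<^sup>+y. indicator {0..<1} y * ennreal ((cmod (\<Sum>n\<in>S. e2pi (of_int n * y) * ?a x n))^4) \<partial>lborel) \<partial>lborel)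
      \<le> (\<integral>\<^sup>+x. 2 * (\<Sum>n\<in>S. ennreal ((cmod (?a x n))^4))
          + (\<Sum>p\<in>{p\<in>S\<times>S. fst p \<noteq> snd p}. ennreal (2 * W * real_of_int \<bar>fst p - snd p\<bar>)
               * (ennreal ((cmod (?a x (fst p)))\<^sup>2) * ennreal ((cmod (?a x (snd p)))\<^sup>2))) \<partial>lborel)"
    by (intro nn_integral_mono L4_trig_poly_le[OF S W0 W])
  also have "\<dots> = 2 * (\<Sum>n\<in>S. \<integral>\<^sup>+x. ennreal ((cmod (h n x))^4) \<partial>lborel)
          + (\<Sum>p\<in>{p\<in>S\<times>S. fst p \<noteq> snd p}. ennreal (2 * W * real_of_int \<bar>fst p - snd p\<bar>)
               * (\<integral>\<^sup>+x. ennreal ((cmod (?a x (fst p)))\<^sup>2) * ennreal ((cmod (?a x (snd p)))\<^sup>2) \<partial>lborel))"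
    by (simp add: nn_integral_add nn_integral_sum nn_integral_cmult translate del: sum_ennreal)
  also have "\<dots> \<le> 2 * (\<Sum>n\<in>S. ennreal (Q n))
          + (\<Sum>p\<in>{p\<in>S\<times>S. fst p \<noteq> snd p}. ennreal (2 * W * real_of_int \<bar>fst p - snd p\<bar>)
               * (\<integral>\<^sup>+x. ennreal ((cmod (?a x (fst p)))\<^sup>2) * ennreal ((cmod (?a x (snd p)))\<^sup>2) \<partial>lborel))"
    by (intro add_mono mult_left_mono sum_mono L4 order.refl) auto
  finally show ?thesis .
qed

lemma L4_transport_sum_le:
  fixes h :: "int \<Rightarrow> real \<Rightarrow> complex" and S :: "int set" and c W :: real
    and M Q :: "int \<Rightarrow> real"
  assumes S: "finite S" and c: "c > 0" and W0: "W \<ge> 0"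
    and W: "\<And>m. (\<Sum>p\<in>{p\<in>S\<times>S. fst p + snd p = m \<and> fst p \<noteq> snd p}. 1 / real_of_int \<bar>fst p - snd p\<bar>) \<le> W"
    and hm[measurable]: "\<And>n. h n \<in> borel_measurable borel"
    and L2: "\<And>n. n \<in> S \<Longrightarrow> (\<integral>\<^sup>+x. ennreal ((cmod (h n x))\<^sup>2) \<partial>lborel) \<le> ennreal (M n)"
    and L4: "\<And>n. n \<in> S \<Longrightarrow> (\<integral>\<^sup>+x. ennreal ((cmod (h n x))^4) \<partial>lborel) \<le> ennreal (Q n)"
    and M0: "\<And>n. M n \<ge> 0" and Q0: "\<And>n. Q n \<ge> 0"
  shows "(\<integral>\<^sup>+t. indicator {0..1} t * (\<integral>\<^sup>+x. (\<integral>\<^sup>+y. indicator {0..<1} y *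
            ennreal ((cmod (\<Sum>n\<in>S. e2pi (of_int n * y) * h n (x - c * t * of_int n)))^4) \<partial>lborel) \<partial>lborel) \<partial>lborel)
     \<le> ennreal (2 * (\<Sum>n\<in>S. Q n) + (2 * W / c) * (\<Sum>p\<in>{p\<in>S\<times>S. fst p \<noteq> snd p}. M (fst p) * M (snd p)))"
proof -
  define Pr where "Pr = {p\<in>S\<times>S. fst p \<noteq> snd p}"
  define wt where "wt p = 2 * W * real_of_int \<bar>fst p - snd p\<bar>" for p :: "int \<times> int"
  define I where "I p t = (\<integral>\<^sup>+x. ennreal ((cmod (h (fst p) (x - c * t * of_int (fst p))))\<^sup>2) *
                                ennreal ((cmod (h (snd p) (x - c * t * of_int (snd p))))\<^sup>2) \<partial>lborel)" for p t
  have Im[measurable]: "I p \<in> borel_measurable borel" for p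
    unfolding I_def by measurable
  have pair: "ennreal (wt p) * (\<integral>\<^sup>+t. indicator {0..1} t * I p t \<partial>lborel)
      \<le> ennreal ((2 * W / c) * (M (fst p) * M (snd p)))" if p: "p \<in> Pr" for p
  proof -
    have p': "fst p \<noteq> snd p" "fst p \<in> S" "snd p \<in> S" using p by (auto simp: Pr_def)
    have "(\<integral>\<^sup>+t. indicator {0..1} t * I p t \<partial>lborel)
        \<le> ennreal (1 / (c * \<bar>of_int (fst p) - of_int (snd p)\<bar>)) * (\<integral>\<^sup>+x. ennreal ((cmod (h (fst p) x))\<^sup>2) \<partial>lborel)
           * (\<integral>\<^sup>+x. ennreal ((cmod (h (snd p) x))\<^sup>2) \<partial>lborel)"
      unfolding I_def by (rule bilinear_transport_estimate[OF _ _ c p'(1)]) measurable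
    also have "\<dots> \<le> ennreal (1 / (c * \<bar>of_int (fst p) - of_int (snd p)\<bar>)) * ennreal (M (fst p)) * ennreal (M (snd p))"
      by (intro mult_mono L2 p' order.refl) auto
    finally have "(\<integral>\<^sup>+t. indicator {0..1} t * I p t \<partial>lborel)
        \<le> ennreal (1 / (c * \<bar>of_int (fst p) - of_int (snd p)\<bar>)) * ennreal (M (fst p)) * ennreal (M (snd p))" .
    then have "ennreal (wt p) * (\<integral>\<^sup>+t. indicator {0..1} t * I p t \<partial>lborel)
        \<le> ennreal (wt p) * (ennreal (1 / (c * \<bar>of_int (fst p) - of_int (snd p)\<bar>)) * ennreal (M (fst p)) * ennreal (M (snd p)))"
      by (rule mult_left_mono) simp
    also have "\<dots> = ennreal ((2 * W / c) * (M (fst p) * M (snd p)))"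
    proof -
      have d: "real_of_int \<bar>fst p - snd p\<bar> > 0" using p'(1) by simp
      have "wt p * (1 / (c * \<bar>of_int (fst p) - of_int (snd p)\<bar>)) = 2 * W / c"
        using d c by (simp add: wt_def field_simps)
      then show ?thesis using W0 c M0 d by (simp add: ennreal_mult[symmetric] mult.assoc[symmetric] wt_def)
    qed
    finally show ?thesis .
  qed
  have "(\<integral>\<^sup>+t. indicator {0..1} t * (\<integral>\<^sup>+x. (\<integral>\<^sup>+y. indicator {0..<1} y *
            ennreal ((cmod (\<Sum>n\<in>S. e2pi (of_int n * y) * h n (x - c * t * of_int n)))^4) \<partial>lborel) \<partial>lborel) \<partial>lborel)
      \<le> (\<integral>\<^sup>+t. indicator {0..1} t * (2 * (\<Sum>n\<in>S. ennreal (Q n)) + (\<Sum>p\<in>Pr. ennreal (wt p) * I p t)) \<partial>lborel)"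
    unfolding Pr_def wt_def I_def
    by (intro nn_integral_mono mult_left_mono L4_transport_sum_fixed_time_le[OF S W0 W hm L4]) auto
  also have "\<dots> = 2 * (\<Sum>n\<in>S. ennreal (Q n)) + (\<Sum>p\<in>Pr. ennreal (wt p) * (\<integral>\<^sup>+t. indicator {0..1} t * I p t \<partial>lborel))"
    by (simp add: distrib_left sum_distrib_left nn_integral_add nn_integral_sum nn_integral_cmult nn_integral_multc ac_simps)
  also have "\<dots> \<le> 2 * (\<Sum>n\<in>S. ennreal (Q n)) + (\<Sum>p\<in>Pr. ennreal ((2 * W / c) * (M (fst p) * M (snd p))))"
    by (intro add_mono sum_mono pair order.refl)
  also have "\<dots> = ennreal (2 * (\<Sum>n\<in>S. Q n) + (2 * W / c) * (\<Sum>p\<in>Pr. M (fst p) * M (snd p)))"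
    using W0 c M0 Q0
    by (simp add: ennreal_plus sum_nonneg sum_distrib_left ennreal_mult flip: sum_ennreal)
  finally show ?thesis by (simp add: Pr_def)
qed

section \<open>The Schroedinger evolution as a sum of transported profiles\<close>

lemma L4_pow4_TRT_iterated:
  fixes U :: "real \<Rightarrow> real \<Rightarrow> real \<Rightarrow> complex"
  assumes Um[measurable]: "(\<lambda>w. U (fst w) (fst (snd w)) (snd (snd w))) \<in> borel_measurable (lborel \<Otimes>\<^sub>M (lborel \<Otimes>\<^sub>M lborel))"
  shows "L4_pow4_TRT U = (\<integral>\<^sup>+t. indicator {0..1} t * (\<integral>\<^sup>+x. (\<integral>\<^sup>+y. indicator {0..<1} y *
            ennreal ((cmod (U t x y))^4) \<partial>lborel) \<partial>lborel) \<partial>lborel)"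
proof -
  define F where "F w = indicator {0..1::real} (fst w) * indicator {0..<1::real} (snd (snd w)) *
       ennreal ((cmod (U (fst w) (fst (snd w)) (snd (snd w))))^4)" for w :: "real \<times> real \<times> real"
  have Fm[measurable]: "F \<in> borel_measurable (lborel \<Otimes>\<^sub>M (lborel \<Otimes>\<^sub>M lborel))"
    unfolding F_def by measurable
  have "L4_pow4_TRT U = (\<integral>\<^sup>+w. F w \<partial>lebesgue)"
    unfolding L4_pow4_TRT_def F_def by (intro nn_integral_cong) (auto simp: indicator_def)
  also have "\<dots> = (\<integral>\<^sup>+w. F w \<partial>lborel)" by (rule nn_integral_completion)
  also have "\<dots> = (\<integral>\<^sup>+w. F w \<partial>(lborel \<Otimes>\<^sub>M (lborel \<Otimes>\<^sub>M lborel)))" by (simp only: lborel_prod)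
  also have "\<dots> = (\<integral>\<^sup>+t. (\<integral>\<^sup>+v. F (t, v) \<partial>(lborel \<Otimes>\<^sub>M lborel)) \<partial>lborel)"
    by (rule lborel_pair.nn_integral_fst[symmetric]) (rule Fm)
  also have "\<dots> = (\<integral>\<^sup>+t. (\<integral>\<^sup>+x. (\<integral>\<^sup>+y. F (t, x, y) \<partial>lborel) \<partial>lborel) \<partial>lborel)"
  proof (intro nn_integral_cong)
    fix t
    have mt: "(\<lambda>v. F (t, v)) \<in> borel_measurable (lborel \<Otimes>\<^sub>M lborel)" by measurable
    show "(\<integral>\<^sup>+v. F (t, v) \<partial>(lborel \<Otimes>\<^sub>M lborel)) = (\<integral>\<^sup>+x. (\<integral>\<^sup>+y. F (t, x, y) \<partial>lborel) \<partial>lborel)"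
      using lborel.nn_integral_fst[OF mt] by simp
  qed
  also have "\<dots> = (\<integral>\<^sup>+t. indicator {0..1} t * (\<integral>\<^sup>+x. (\<integral>\<^sup>+y. indicator {0..<1} y *
            ennreal ((cmod (U t x y))^4) \<partial>lborel) \<partial>lborel) \<partial>lborel)"
  proof (intro nn_integral_cong)
    fix t :: real
    show "(\<integral>\<^sup>+x. (\<integral>\<^sup>+y. F (t, x, y) \<partial>lborel) \<partial>lborel) = indicator {0..1} t * (\<integral>\<^sup>+x. (\<integral>\<^sup>+y. indicator {0..<1} y *
            ennreal ((cmod (U t x y))^4) \<partial>lborel) \<partial>lborel)"
      by (cases "t \<in> {0..1}") (simp_all add: F_def)
  qed
  finally show ?thesis .
qed

lemma continuous_on_smooth_fun: "smooth_fun \<phi> \<Longrightarrow> continuous_on UNIV \<phi>"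
  unfolding smooth_fun_def
  by (intro continuous_at_imp_continuous_on ballI differentiable_imp_continuous_within) (metis funpow_0)

lemma bounded_if_continuous_vanishing_outside:
  fixes \<phi> :: "real \<Rightarrow> real"
  assumes cont: "continuous_on UNIV \<phi>" and z: "\<And>x. x \<notin> {-R..R} \<Longrightarrow> \<phi> x = 0"
  obtains B where "\<And>x. \<bar>\<phi> x\<bar> \<le> B"
proof -
  have "compact (\<phi> ` {-R..R})" by (intro compact_continuous_image continuous_on_subset[OF cont]) auto
  then obtain B0 where B0: "\<And>y. y \<in> \<phi> ` {-R..R} \<Longrightarrow> norm y \<le> B0"
    using compact_imp_bounded bounded_iff by metis
  have "\<bar>\<phi> x\<bar> \<le> max 0 B0" for x
    using B0[of "\<phi> x"] z[of x] by (cases "x \<in> {-R..R}") auto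
  then show ?thesis by (rule that)
qed

lemma complex_lebesgue_measurable_AE_borel:
  fixes h :: "real \<Rightarrow> complex"
  assumes [measurable]: "h \<in> borel_measurable lebesgue"
  shows "\<exists>h'. h' \<in> borel_measurable borel \<and> (AE x in lborel. h x = h' x)"
proof -
  have "(\<lambda>x. Re (h x)) \<in> borel_measurable (completion lborel)" "(\<lambda>x. Im (h x)) \<in> borel_measurable (completion lborel)"
    by measurable
  then obtain r i where r: "r \<in> borel_measurable lborel" "AE x in lborel. Re (h x) = r x"
    and i: "i \<in> borel_measurable lborel" "AE x in lborel. Im (h x) = i x"
    using completion_ex_borel_measurable_real by metis
  have [measurable]: "r \<in> borel_measurable borel" "i \<in> borel_measurable borel" using r i by auto
  show ?thesis
  proof (intro exI conjI)
    show "(\<lambda>x. Complex (r x) (i x)) \<in> borel_measurable borel"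
      unfolding Complex_eq by measurable
    show "AE x in lborel. h x = Complex (r x) (i x)"
      using r(2) i(2) by eventually_elim (simp add: complex_eq_iff)
  qed
qed

lemma exp_schrod_phase:
  "exp ((2 * pi * \<i>) * complex_of_real (\<xi> * x + real_of_int n * y)) *
     exp (- (4 * pi\<^sup>2 * \<i>) * complex_of_real (t * \<xi> * real_of_int n))
   = e2pi (of_int n * y) * e2pi (\<xi> * (x - 2*pi*t* of_int n))"
proof -
  have "(2 * pi * \<i>) * complex_of_real (\<xi> * x + real_of_int n * y) + (- (4 * pi\<^sup>2 * \<i>) * complex_of_real (t * \<xi> * real_of_int n))
      = (2 * pi * \<i>) * complex_of_real (of_int n * y + \<xi> * (x - 2*pi*t* of_int n))"
    by (simp add: algebra_simps power2_eq_square)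
  moreover have "e2pi (of_int n * y) * e2pi (\<xi> * (x - 2*pi*t* of_int n))
      = exp ((2 * pi * \<i>) * complex_of_real (of_int n * y + \<xi> * (x - 2*pi*t* of_int n)))"
    unfolding e2pi_add[symmetric] by (simp only: e2pi_def)
  ultimately show ?thesis by (simp only: exp_add[symmetric])
qed

lemma schrod_PN_eq_transport_sum:
  fixes \<phi> :: "real \<Rightarrow> real" and N :: real and g :: "real \<Rightarrow> int \<Rightarrow> complex" and gb :: "int \<Rightarrow> real \<Rightarrow> complex"
  assumes \<phi>m[measurable]: "\<phi> \<in> borel_measurable borel"
    and gm[measurable]: "\<And>n. (\<lambda>\<xi>. g \<xi> n) \<in> borel_measurable lebesgue"
    and gbm[measurable]: "\<And>n. gb n \<in> borel_measurable borel"
    and ae: "\<And>n. AE \<xi> in lborel. g \<xi> n = gb n \<xi>"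
  shows "schrod_PN \<phi> N g t x y = (\<Sum>n\<in>{n::int. \<bar>real_of_int n\<bar> \<le> 2*N}. e2pi (of_int n * y) *
           inv_fourier (\<lambda>\<xi>. complex_of_real (\<phi> (\<xi>/N) * \<phi> (of_int n / N)) * gb n \<xi>) (x - 2*pi*t* of_int n))"
  unfolding schrod_PN_def inv_fourier_def
proof (intro sum.cong refl)
  fix n :: int
  define E1 where "E1 \<xi> = exp ((2 * pi * \<i>) * complex_of_real (\<xi> * x + real_of_int n * y)) *
           exp (- (4 * pi\<^sup>2 * \<i>) * complex_of_real (t * \<xi> * real_of_int n)) *
           complex_of_real (\<phi> (\<xi> / N) * \<phi> (real_of_int n / N))" for \<xi>
  have E1m[measurable]: "E1 \<in> borel_measurable borel"
    unfolding E1_def by measurable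
  have E1l[measurable]: "E1 \<in> borel_measurable lebesgue" by (rule measurable_completion) simp
  have "(LINT \<xi>|lebesgue. E1 \<xi> * g \<xi> n) = (LINT \<xi>|lebesgue. E1 \<xi> * gb n \<xi>)"
  proof (rule integral_cong_AE)
    show "AE \<xi> in lebesgue. E1 \<xi> * g \<xi> n = E1 \<xi> * gb n \<xi>"
      using AE_completion[OF ae[of n]] by eventually_elim simp
    show "(\<lambda>\<xi>. E1 \<xi> * gb n \<xi>) \<in> borel_measurable lebesgue"
      by (rule measurable_completion) simp
    show "(\<lambda>\<xi>. E1 \<xi> * g \<xi> n) \<in> borel_measurable lebesgue"
      using E1l gm[of n] by (rule borel_measurable_times)
  qed
  also have "\<dots> = (LINT \<xi>|lborel. E1 \<xi> * gb n \<xi>)"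
    by (rule integral_completion) simp
  also have "\<dots> = (LINT \<xi>|lborel. e2pi (of_int n * y) * (e2pi (\<xi> * (x - 2*pi*t* of_int n)) * (complex_of_real (\<phi> (\<xi>/N) * \<phi> (of_int n / N)) * gb n \<xi>)))"
    unfolding E1_def exp_schrod_phase by (intro Bochner_Integration.integral_cong) (simp_all add: mult.assoc)
  also have "\<dots> = e2pi (of_int n * y) * (LINT \<xi>|lborel. e2pi (\<xi> * (x - 2*pi*t* of_int n)) * (complex_of_real (\<phi> (\<xi>/N) * \<phi> (of_int n / N)) * gb n \<xi>))"
    by (rule integral_mult_right_zero)
  finally show "(LINT \<xi>|lebesgue. exp ((2 * pi * \<i>) * complex_of_real (\<xi> * x + real_of_int n * y)) *
           exp (- (4 * pi\<^sup>2 * \<i>) * complex_of_real (t * \<xi> * real_of_int n)) *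
           complex_of_real (\<phi> (\<xi> / N) * \<phi> (real_of_int n / N)) * g \<xi> n)
      = e2pi (of_int n * y) * (LINT \<xi>|lborel. e2pi (\<xi> * (x - 2*pi*t* of_int n)) * (complex_of_real (\<phi> (\<xi>/N) * \<phi> (of_int n / N)) * gb n \<xi>))"
    by (simp only: E1_def)
qed

lemma finite_card_int_abs_le:
  fixes r :: real assumes r: "r \<ge> 0"
  shows "finite {n::int. \<bar>real_of_int n\<bar> \<le> r}" and "real (card {n::int. \<bar>real_of_int n\<bar> \<le> r}) \<le> 2 * r + 1"
proof -
  have sub: "{n::int. \<bar>real_of_int n\<bar> \<le> r} \<subseteq> {- \<lfloor>r\<rfloor> .. \<lfloor>r\<rfloor>}"
  proof
    fix n :: int assume "n \<in> {n. \<bar>real_of_int n\<bar> \<le> r}"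
    then have "real_of_int n \<le> r" "real_of_int (- n) \<le> r" by (auto simp: abs_le_iff)
    then have "n \<le> \<lfloor>r\<rfloor>" "- n \<le> \<lfloor>r\<rfloor>" by (simp_all only: le_floor_iff)
    then show "n \<in> {- \<lfloor>r\<rfloor> .. \<lfloor>r\<rfloor>}" by auto
  qed
  then show "finite {n::int. \<bar>real_of_int n\<bar> \<le> r}" by (rule finite_subset) simp
  have "card {n::int. \<bar>real_of_int n\<bar> \<le> r} \<le> card {- \<lfloor>r\<rfloor> .. \<lfloor>r\<rfloor>}"
    using sub by (rule card_mono[rotated]) simp
  then have "real (card {n::int. \<bar>real_of_int n\<bar> \<le> r}) \<le> real (nat (2 * \<lfloor>r\<rfloor> + 1))"
    by simp
  also have "\<dots> = 2 * of_int \<lfloor>r\<rfloor> + 1" using r by (simp add: of_nat_nat)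
  also have "\<dots> \<le> 2 * r + 1" by (simp add: of_int_floor_le)
  finally show "real (card {n::int. \<bar>real_of_int n\<bar> \<le> r}) \<le> 2 * r + 1" .
qed

lemma nn_integral_norm_scaled_sq_le:
  fixes c :: "'a \<Rightarrow> real" and G :: "'a \<Rightarrow> complex"
  assumes [measurable]: "G \<in> borel_measurable M" and c: "\<And>\<xi>. \<bar>c \<xi>\<bar> \<le> C"
  shows "(\<integral>\<^sup>+\<xi>. ennreal ((cmod (complex_of_real (c \<xi>) * G \<xi>))\<^sup>2) \<partial>M)
      \<le> ennreal (C\<^sup>2) * (\<integral>\<^sup>+\<xi>. ennreal ((cmod (G \<xi>))\<^sup>2) \<partial>M)"
proof -
  have "(cmod (complex_of_real (c \<xi>) * G \<xi>))\<^sup>2 \<le> C\<^sup>2 * (cmod (G \<xi>))\<^sup>2" for \<xi>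
    unfolding norm_mult power_mult_distrib norm_of_real
    by (intro mult_right_mono power_mono c) auto
  then have "(\<integral>\<^sup>+\<xi>. ennreal ((cmod (complex_of_real (c \<xi>) * G \<xi>))\<^sup>2) \<partial>M)
      \<le> (\<integral>\<^sup>+\<xi>. ennreal (C\<^sup>2) * ennreal ((cmod (G \<xi>))\<^sup>2) \<partial>M)"
    by (intro nn_integral_mono) (simp add: ennreal_mult[symmetric] ennreal_leI)
  also have "\<dots> = ennreal (C\<^sup>2) * (\<integral>\<^sup>+\<xi>. ennreal ((cmod (G \<xi>))\<^sup>2) \<partial>M)"
    by (rule nn_integral_cmult) measurable
  finally show ?thesis .
qed

lemma inv_fourier_cutoff_bounds:
  fixes \<phi> :: "real \<Rightarrow> real" and gb :: "real \<Rightarrow> complex" and N B A c :: real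
  assumes \<phi>m[measurable]: "\<phi> \<in> borel_measurable borel" and \<phi>B: "\<And>x. \<bar>\<phi> x\<bar> \<le> B"
    and \<phi>0: "\<And>x. \<bar>x\<bar> \<ge> 2 \<Longrightarrow> \<phi> x = 0" and N: "N \<ge> 1"
    and gbm[measurable]: "gb \<in> borel_measurable borel"
    and gbA: "(\<integral>\<^sup>+\<xi>. ennreal ((cmod (gb \<xi>))\<^sup>2) \<partial>lborel) = ennreal A" and A: "A \<ge> 0"
  defines "G \<equiv> \<lambda>\<xi>. complex_of_real (\<phi> (\<xi>/N) * \<phi> c) * gb \<xi>"
  shows "(\<integral>\<^sup>+x. ennreal ((cmod (inv_fourier G x))\<^sup>2) \<partial>lborel) \<le> ennreal (B^4 * A)"
    and "(\<integral>\<^sup>+x. ennreal ((cmod (inv_fourier G x))^4) \<partial>lborel) \<le> ennreal (4 * N * (B^4 * A)\<^sup>2)"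
proof -
  have Gm[measurable]: "G \<in> borel_measurable borel" unfolding G_def by measurable
  have N2: "2 * N > 0" using N by simp
  have Gsupp: "G \<xi> = 0" if "\<xi> \<notin> {-(2*N)..2*N}" for \<xi>
  proof -
    have "\<bar>\<xi>/N\<bar> \<ge> 2" using that N by (auto simp: abs_if field_simps)
    then show ?thesis by (simp add: G_def \<phi>0)
  qed
  have "\<bar>\<phi> (\<xi>/N) * \<phi> c\<bar> \<le> B\<^sup>2" for \<xi>
    unfolding abs_mult power2_eq_square by (intro mult_mono \<phi>B) (use \<phi>B[of 0] in auto)
  then have "(\<integral>\<^sup>+\<xi>. ennreal ((cmod (G \<xi>))\<^sup>2) \<partial>lborel) \<le> ennreal ((B\<^sup>2)\<^sup>2) * ennreal A"
    unfolding G_def gbA[symmetric] by (intro nn_integral_norm_scaled_sq_le) auto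
  then have GL2: "(\<integral>\<^sup>+\<xi>. ennreal ((cmod (G \<xi>))\<^sup>2) \<partial>lborel) \<le> ennreal (B^4 * A)"
    using A by (simp add: ennreal_mult[symmetric] flip: power_mult)
  have fin: "(\<integral>\<^sup>+\<xi>. (cmod (G \<xi>))\<^sup>2 \<partial>lborel) < \<infinity>" using GL2 by (simp add: le_less_trans)
  show "(\<integral>\<^sup>+x. ennreal ((cmod (inv_fourier G x))\<^sup>2) \<partial>lborel) \<le> ennreal (B^4 * A)"
    using nn_integral_norm_inv_fourier_sq_le[OF N2 Gm Gsupp fin] GL2 by (rule order_trans)
  have "(\<integral>\<^sup>+x. ennreal ((cmod (inv_fourier G x))^4) \<partial>lborel) \<le> ennreal (2 * (2 * N) * (B^4 * A)\<^sup>2)"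
    using A by (intro nn_integral_norm_inv_fourier_pow4_le[OF N2 Gm _ GL2] Gsupp) simp_all
  then show "(\<integral>\<^sup>+x. ennreal ((cmod (inv_fourier G x))^4) \<partial>lborel) \<le> ennreal (4 * N * (B^4 * A)\<^sup>2)"
    by (simp add: mult.assoc)
qed

lemma L4_schrod_PN_le_coefficient_sums:
  fixes \<phi> :: "real \<Rightarrow> real" and N B :: real and g :: "real \<Rightarrow> int \<Rightarrow> complex"
  assumes \<phi>m[measurable]: "\<phi> \<in> borel_measurable borel" and \<phi>B: "\<And>x. \<bar>\<phi> x\<bar> \<le> B"
    and \<phi>0: "\<And>x. \<bar>x\<bar> \<ge> 2 \<Longrightarrow> \<phi> x = 0" and N: "N \<ge> 1"
    and gm[measurable]: "\<And>n. (\<lambda>\<xi>. g \<xi> n) \<in> borel_measurable lebesgue"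
    and gfin: "\<And>n. (\<integral>\<^sup>+\<xi>. ennreal ((cmod (g \<xi> n))\<^sup>2) \<partial>lebesgue) < \<infinity>"
  defines "S \<equiv> {n::int. \<bar>real_of_int n\<bar> \<le> 2 * N}"
    and "a \<equiv> \<lambda>n. enn2real (\<integral>\<^sup>+\<xi>. ennreal ((cmod (g \<xi> n))\<^sup>2) \<partial>lebesgue)"
  shows "L4_pow4_TRT (schrod_PN \<phi> N g)
      \<le> ennreal (8 * N * B^8 * (\<Sum>n\<in>S. (a n)\<^sup>2)
          + (2 * (1 + ln (4 * N)) / pi) * B^8 * (\<Sum>p\<in>{p\<in>S\<times>S. fst p \<noteq> snd p}. a (fst p) * a (snd p)))"
proof -
  have S: "finite S" unfolding S_def using N by (intro finite_card_int_abs_le) simp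
  have a0: "a n \<ge> 0" for n by (simp add: a_def)
  obtain gb where gbm[measurable]: "\<And>n. gb n \<in> borel_measurable borel"
    and gae: "\<And>n. AE \<xi> in lborel. g \<xi> n = gb n \<xi>"
    using complex_lebesgue_measurable_AE_borel[OF gm] by metis
  have gbA: "(\<integral>\<^sup>+\<xi>. ennreal ((cmod (gb n \<xi>))\<^sup>2) \<partial>lborel) = ennreal (a n)" for n
  proof -
    have "(\<integral>\<^sup>+\<xi>. ennreal ((cmod (gb n \<xi>))\<^sup>2) \<partial>lborel) = (\<integral>\<^sup>+\<xi>. ennreal ((cmod (g \<xi> n))\<^sup>2) \<partial>lborel)"
      by (rule nn_integral_cong_AE) (use gae[of n] in \<open>eventually_elim, simp\<close>)
    also have "\<dots> = (\<integral>\<^sup>+\<xi>. ennreal ((cmod (g \<xi> n))\<^sup>2) \<partial>lebesgue)"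
      by (simp add: nn_integral_completion)
    finally show ?thesis using gfin[of n] by (simp add: a_def)
  qed
  define h where "h n = inv_fourier (\<lambda>\<xi>. complex_of_real (\<phi> (\<xi>/N) * \<phi> (of_int n / N)) * gb n \<xi>)" for n
  have hm[measurable]: "h n \<in> borel_measurable borel" for n unfolding h_def by measurable
  have hL2: "(\<integral>\<^sup>+x. ennreal ((cmod (h n x))\<^sup>2) \<partial>lborel) \<le> ennreal (B^4 * a n)" for n
    unfolding h_def by (rule inv_fourier_cutoff_bounds(1)[OF \<phi>m \<phi>B \<phi>0 N gbm gbA a0])
  have hL4: "(\<integral>\<^sup>+x. ennreal ((cmod (h n x))^4) \<partial>lborel) \<le> ennreal (4 * N * (B^4 * a n)\<^sup>2)" for n
    unfolding h_def by (rule inv_fourier_cutoff_bounds(2)[OF \<phi>m \<phi>B \<phi>0 N gbm gbA a0])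
  have schrod: "schrod_PN \<phi> N g = (\<lambda>t x y. \<Sum>n\<in>S. e2pi (of_int n * y) * h n (x - 2 * pi * t * of_int n))"
    by (intro ext) (simp add: schrod_PN_eq_transport_sum[OF \<phi>m gm gbm gae] S_def h_def)
  define W where "W = 2 * (1 + ln (4 * N))"
  have W: "(\<Sum>p\<in>{p\<in>S\<times>S. fst p + snd p = m \<and> fst p \<noteq> snd p}. 1 / real_of_int \<bar>fst p - snd p\<bar>) \<le> W" for m
    unfolding W_def S_def by (rule sum_inverse_gap_le[OF N])
  have "L4_pow4_TRT (schrod_PN \<phi> N g) = (\<integral>\<^sup>+t. indicator {0..1} t * (\<integral>\<^sup>+x. (\<integral>\<^sup>+y. indicator {0..<1} y *
          ennreal ((cmod (\<Sum>n\<in>S. e2pi (of_int n * y) * h n (x - 2 * pi * t * of_int n)))^4) \<partial>lborel) \<partial>lborel) \<partial>lborel)"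
    unfolding schrod h_def by (rule L4_pow4_TRT_iterated) measurable
  also have "\<dots> \<le> ennreal (2 * (\<Sum>n\<in>S. 4 * N * (B^4 * a n)\<^sup>2)
      + (2 * W / (2 * pi)) * (\<Sum>p\<in>{p\<in>S\<times>S. fst p \<noteq> snd p}. (B^4 * a (fst p)) * (B^4 * a (snd p))))"
    by (rule L4_transport_sum_le[OF S _ _ W hm hL2 hL4]) (use N a0 in \<open>auto simp: W_def\<close>)
  also have "\<dots> = ennreal (8 * N * B^8 * (\<Sum>n\<in>S. (a n)\<^sup>2)
          + (2 * (1 + ln (4 * N)) / pi) * B^8 * (\<Sum>p\<in>{p\<in>S\<times>S. fst p \<noteq> snd p}. a (fst p) * a (snd p)))"
  proof -
    have "(\<Sum>n\<in>S. 4 * N * (B^4 * a n)\<^sup>2) = 4 * N * B^8 * (\<Sum>n\<in>S. (a n)\<^sup>2)"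
      by (simp add: sum_distrib_left power_mult_distrib mult_ac flip: power_mult)
    moreover have "(\<Sum>p\<in>{p\<in>S\<times>S. fst p \<noteq> snd p}. (B^4 * a (fst p)) * (B^4 * a (snd p)))
        = B^8 * (\<Sum>p\<in>{p\<in>S\<times>S. fst p \<noteq> snd p}. a (fst p) * a (snd p))"
      by (simp add: sum_distrib_left mult_ac flip: power_add)
    moreover have "2 * (4 * N * B^8 * X) + 2 * W / (2 * pi) * (B^8 * Y) = 8 * N * B^8 * X + (2 * (1 + ln (4 * N)) / pi) * B^8 * Y"
      for X Y :: real
      by (simp add: W_def field_simps)
    ultimately show ?thesis by (simp only:)
  qed
  finally show ?thesis .
qed

section \<open>The estimate in terms of the norms of f\<close>

lemma powr_one_quarter_pow4: "(y::real) \<ge> 0 \<Longrightarrow> (y powr (1/4))^4 = y"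
proof (cases "y = 0")
  case False
  assume "y \<ge> 0"
  then have "y > 0" using False by simp
  have "(y powr (1/4))^4 = (y powr (1/4)) powr (real 4)"
  proof -
    have "y powr (1/4) > 0" using \<open>y > 0\<close> by simp
    then show ?thesis by (rule powr_realpow[symmetric])
  qed
  also have "\<dots> = y powr ((1/4) * real 4)" by (rule powr_powr)
  finally show ?thesis using \<open>y > 0\<close> by simp
qed simp

lemma sum_pow4_le_pow4_sum: "(a::real) \<ge> 0 \<Longrightarrow> b \<ge> 0 \<Longrightarrow> a^4 + b^4 \<le> (a + b)^4"
proof -
  assume a: "a \<ge> 0" and b: "b \<ge> 0"
  have "(a + b)^4 = a^4 + b^4 + (4*a^3*b + 6*a^2*b^2 + 4*a*b^3)"
    by (simp add: power4_eq_xxxx power3_eq_cube power2_eq_square algebra_simps)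
  moreover have "4*a^3*b + 6*a^2*b^2 + 4*a*b^3 \<ge> 0" using a b by simp
  ultimately show ?thesis by linarith
qed

lemma coefficient_sums_le:
  fixes a :: "int \<Rightarrow> real" and S :: "int set" and N B v x :: real
  assumes N: "N \<ge> 1" and S: "finite S" and card: "real (card S) \<le> 5 * N" and a0: "\<And>n. a n \<ge> 0"
    and sq: "(\<Sum>n\<in>S. (a n)\<^sup>2) \<le> x" and lin: "(\<Sum>n\<in>S. a n) \<le> 2 * v"
  shows "8 * N * B^8 * (\<Sum>n\<in>S. (a n)\<^sup>2)
          + (2 * (1 + ln (4 * N)) / pi) * B^8 * (\<Sum>p\<in>{p\<in>S\<times>S. fst p \<noteq> snd p}. a (fst p) * a (snd p))
      \<le> (8 * B^8 / pi) * ln N * v\<^sup>2 + B^8 * (8 + 10 * (1 + ln 4) / pi) * N * x"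
proof -
  define P where "P = (\<Sum>p\<in>{p\<in>S\<times>S. fst p \<noteq> snd p}. a (fst p) * a (snd p))"
  define sa where "sa = (\<Sum>n\<in>S. a n)"
  have sa0: "sa \<ge> 0" unfolding sa_def by (intro sum_nonneg a0)
  have "P \<le> (\<Sum>p\<in>S\<times>S. a (fst p) * a (snd p))"
    unfolding P_def by (rule sum_mono2) (use S a0 in auto)
  also have "\<dots> = sa\<^sup>2"
    by (simp add: sa_def power2_eq_square sum_product sum.cartesian_product split_def)
  finally have offdiag: "P \<le> sa\<^sup>2" .
  have "sa\<^sup>2 \<le> real (card S) * (\<Sum>n\<in>S. (a n)\<^sup>2)"
    using Cauchy_Schwarz_ineq_sum[of "\<lambda>_. 1" a S] by (simp add: sa_def)
  also have "\<dots> \<le> (5 * N) * x"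
    by (intro mult_mono card sq) (use N in \<open>auto intro: sum_nonneg\<close>)
  finally have by_card: "sa\<^sup>2 \<le> 5 * N * x" by simp
  have "sa\<^sup>2 \<le> (2 * v)\<^sup>2" using lin sa0 by (intro power_mono) (auto simp: sa_def)
  then have by_v: "sa\<^sup>2 \<le> 4 * v\<^sup>2" by (simp add: power_mult_distrib)
  have "ln (4 * N) = ln 4 + ln N" using N by (simp add: ln_mult)
  then have "8 * N * B^8 * (\<Sum>n\<in>S. (a n)\<^sup>2) + (2 * (1 + ln (4 * N)) / pi) * B^8 * P
      = 8 * N * B^8 * (\<Sum>n\<in>S. (a n)\<^sup>2) + 2 * (1 + ln 4) / pi * B^8 * P + 2 * ln N / pi * B^8 * P"
    by (simp add: field_simps)
  also have "\<dots> \<le> 8 * N * B^8 * x + 2 * (1 + ln 4) / pi * B^8 * (5 * N * x) + 2 * ln N / pi * B^8 * (4 * v\<^sup>2)"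
    using sq N offdiag by_card by_v by (intro add_mono mult_left_mono) (auto simp: zero_le_even_power)
  also have "\<dots> = (8 * B^8 / pi) * ln N * v\<^sup>2 + B^8 * (8 + 10 * (1 + ln 4) / pi) * N * x"
    by (simp add: field_simps)
  finally show ?thesis by (simp add: P_def)
qed

lemma L2_fourier_coefficient_finite:
  assumes "is_L2_fourier f g"
  shows "(\<integral>\<^sup>+\<xi>. ennreal ((cmod (g \<xi> n))\<^sup>2) \<partial>lebesgue) < \<infinity>"
proof -
  let ?A = "\<lambda>n. \<integral>\<^sup>+\<xi>. ennreal ((cmod (g \<xi> n))\<^sup>2) \<partial>lebesgue"
  have "?A n \<le> (\<integral>\<^sup>+n. ?A n \<partial>count_space UNIV)"
    using sum_le_nn_integral_count_space[of "{n}" ?A] by simp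
  also have "\<dots> < \<infinity>" using assms by (simp add: is_L2_fourier_def)
  finally show ?thesis .
qed

lemma sum_coefficients_le_L2_norm_RT:
  assumes f: "in_L2_RT f" and g: "is_L2_fourier f g" and S: "finite S"
  shows "(\<Sum>n\<in>S. enn2real (\<integral>\<^sup>+\<xi>. ennreal ((cmod (g \<xi> n))\<^sup>2) \<partial>lebesgue)) \<le> 2 * (L2_norm_RT f)\<^sup>2"
proof -
  let ?V = "\<integral>\<^sup>+z. indicator (UNIV \<times> {0..<1::real}) z * ennreal ((cmod (f z))\<^sup>2) \<partial>lebesgue"
  have V: "?V < \<infinity>" using f by (simp add: in_L2_RT_def)
  have "enn2real (\<Sum>n\<in>S. \<integral>\<^sup>+\<xi>. ennreal ((cmod (g \<xi> n))\<^sup>2) \<partial>lebesgue) \<le> enn2real (2 * ?V)"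
    using sum_L2_fourier_le_twice_L2_norm[OF f g S] V by (intro enn2real_mono) (auto simp: ennreal_mult_less_top)
  then show ?thesis
    using L2_fourier_coefficient_finite[OF g] by (simp add: enn2real_sum L2_norm_RT_def enn2real_mult)
qed

lemma sum_coefficients_sq_le_l4L2_norm:
  assumes g: "is_L2_fourier f g" and S: "finite S"
  shows "(\<Sum>n\<in>S. (enn2real (\<integral>\<^sup>+\<xi>. ennreal ((cmod (g \<xi> n))\<^sup>2) \<partial>lebesgue))\<^sup>2) \<le> (l4L2_norm g)^4"
proof -
  let ?A = "\<lambda>n. \<integral>\<^sup>+\<xi>. ennreal ((cmod (g \<xi> n))\<^sup>2) \<partial>lebesgue"
  define Y where "Y = (\<integral>\<^sup>+n. ?A n \<partial>count_space UNIV)"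
  define X where "X = (\<integral>\<^sup>+n. (?A n)\<^sup>2 \<partial>count_space UNIV)"
  have Yfin: "Y < \<infinity>" using g by (simp add: is_L2_fourier_def Y_def)
  have "X \<le> (\<integral>\<^sup>+n. Y * ?A n \<partial>count_space UNIV)"
    unfolding X_def Y_def using sum_le_nn_integral_count_space[of "{_}" ?A]
    by (intro nn_integral_mono) (simp add: power2_eq_square mult_right_mono)
  also have "\<dots> = Y * Y" by (simp add: nn_integral_cmult Y_def)
  also have "\<dots> < \<infinity>" using Yfin by (simp add: ennreal_mult_less_top)
  finally have Xfin: "X < \<infinity>" .
  have "enn2real (\<Sum>n\<in>S. (?A n)\<^sup>2) \<le> enn2real X"
    unfolding X_def using Xfin X_def by (intro enn2real_mono sum_le_nn_integral_count_space[OF S]) auto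
  moreover have "(l4L2_norm g)^4 = enn2real X"
    by (simp add: l4L2_norm_def X_def powr_one_quarter_pow4)
  moreover have "enn2real (\<Sum>n\<in>S. (?A n)\<^sup>2) = (\<Sum>n\<in>S. (enn2real (?A n))\<^sup>2)"
    using L2_fourier_coefficient_finite[OF g]
    by (subst enn2real_sum) (auto simp: power2_eq_square enn2real_mult ennreal_mult_less_top)
  ultimately show ?thesis by simp
qed

lemma L4_schrod_PN_le:
  fixes \<phi> :: "real \<Rightarrow> real" and N B :: real
  assumes \<phi>m: "\<phi> \<in> borel_measurable borel" and \<phi>B: "\<And>x. \<bar>\<phi> x\<bar> \<le> B"
    and \<phi>0: "\<And>x. \<bar>x\<bar> \<ge> 2 \<Longrightarrow> \<phi> x = 0" and N: "N \<ge> 1"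
    and f: "in_L2_RT f" and g: "is_L2_fourier f g"
  shows "L4_pow4_TRT (schrod_PN \<phi> N g)
      \<le> ennreal ((8 * B^8 / pi) * ln N * (L2_norm_RT f)^4 + B^8 * (8 + 10 * (1 + ln 4) / pi) * N * (l4L2_norm g)^4)"
proof -
  define S where "S = {n::int. \<bar>real_of_int n\<bar> \<le> 2 * N}"
  define a where "a n = enn2real (\<integral>\<^sup>+\<xi>. ennreal ((cmod (g \<xi> n))\<^sup>2) \<partial>lebesgue)" for n
  have S: "finite S" and card: "real (card S) \<le> 5 * N"
    using finite_card_int_abs_le[of "2 * N"] N by (auto simp: S_def)
  have gm: "(\<lambda>\<xi>. g \<xi> n) \<in> borel_measurable lebesgue" for n
    using g by (simp add: is_L2_fourier_def)
  have "L4_pow4_TRT (schrod_PN \<phi> N g)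
      \<le> ennreal (8 * N * B^8 * (\<Sum>n\<in>S. (a n)\<^sup>2)
          + (2 * (1 + ln (4 * N)) / pi) * B^8 * (\<Sum>p\<in>{p\<in>S\<times>S. fst p \<noteq> snd p}. a (fst p) * a (snd p)))"
    unfolding S_def a_def
    by (rule L4_schrod_PN_le_coefficient_sums[OF \<phi>m \<phi>B \<phi>0 N gm L2_fourier_coefficient_finite[OF g]])
  also have "\<dots> \<le> ennreal ((8 * B^8 / pi) * ln N * ((L2_norm_RT f)\<^sup>2)\<^sup>2 + B^8 * (8 + 10 * (1 + ln 4) / pi) * N * (l4L2_norm g)^4)"
    using sum_coefficients_sq_le_l4L2_norm[OF g S] sum_coefficients_le_L2_norm_RT[OF f g S]
    by (intro ennreal_leI coefficient_sums_le[OF N S card]) (auto simp: a_def)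
  finally show ?thesis by (simp flip: power_mult)
qed

lemma pow4_combination_le:
  fixes K1 K2 L N u w :: real
  assumes "K1 \<ge> 0" "K2 \<ge> 0" "L \<ge> 0" "N \<ge> 0" "u \<ge> 0" "w \<ge> 0"
  shows "K1 * L * u^4 + K2 * N * w^4 \<le> ((K1 + K2) powr (1/4) * (L powr (1/4) * u + N powr (1/4) * w))^4"
proof -
  define \<alpha> where "\<alpha> = L powr (1/4) * u"
  define \<beta> where "\<beta> = N powr (1/4) * w"
  have "\<alpha> \<ge> 0" "\<beta> \<ge> 0" using assms by (simp_all add: \<alpha>_def \<beta>_def)
  have "K1 * L * u^4 + K2 * N * w^4 = K1 * \<alpha>^4 + K2 * \<beta>^4"
    using assms by (simp add: \<alpha>_def \<beta>_def power_mult_distrib powr_one_quarter_pow4)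
  also have "\<dots> \<le> (K1 + K2) * (\<alpha>^4 + \<beta>^4)"
    using assms by (simp add: algebra_simps)
  also have "\<dots> \<le> (K1 + K2) * (\<alpha> + \<beta>)^4"
    using assms sum_pow4_le_pow4_sum[OF \<open>\<alpha> \<ge> 0\<close> \<open>\<beta> \<ge> 0\<close>] by (intro mult_left_mono) auto
  also have "\<dots> = ((K1 + K2) powr (1/4) * (\<alpha> + \<beta>))^4"
    using assms by (simp add: power_mult_distrib powr_one_quarter_pow4)
  finally show ?thesis by (simp add: \<alpha>_def \<beta>_def)
qed

theorem theorem1p8:
  fixes \<phi> :: "real \<Rightarrow> real"
  assumes "smooth_fun \<phi>"
    and "\<And>x. \<phi> (- x) = \<phi> x"
    and "\<And>x. \<bar>x\<bar> \<le> 1 \<Longrightarrow> \<phi> x = 1"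
    and "\<And>x. \<bar>x\<bar> \<ge> 2 \<Longrightarrow> \<phi> x = 0"
  shows "\<exists>C::real. \<forall>(N::real) f g. N \<ge> 1 \<longrightarrow> in_L2_RT f \<longrightarrow> is_L2_fourier f g \<longrightarrow>
           L4_pow4_TRT (schrod_PN \<phi> N g) \<le>
           ennreal ((C * (ln N powr (1/4) * L2_norm_RT f + N powr (1/4) * l4L2_norm g)) ^ 4)"
proof -
  have cont: "continuous_on UNIV \<phi>" by (rule continuous_on_smooth_fun[OF assms(1)])
  then have \<phi>m: "\<phi> \<in> borel_measurable borel" by (rule borel_measurable_continuous_onI)
  have "\<phi> x = 0" if "x \<notin> {-2..2}" for x using that assms(4) by auto
  then obtain B where B: "\<And>x. \<bar>\<phi> x\<bar> \<le> B"
    using bounded_if_continuous_vanishing_outside[OF cont] by blast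
  define K1 where "K1 = 8 * B^8 / pi"
  define K2 where "K2 = B^8 * (8 + 10 * (1 + ln 4) / pi)"
  show ?thesis
  proof (intro exI[of _ "(K1 + K2) powr (1/4)"] allI impI)
    fix N :: real and f g
    assume N: "N \<ge> 1" and f: "in_L2_RT f" and g: "is_L2_fourier f g"
    have "L4_pow4_TRT (schrod_PN \<phi> N g) \<le> ennreal (K1 * ln N * (L2_norm_RT f)^4 + K2 * N * (l4L2_norm g)^4)"
      unfolding K1_def K2_def by (rule L4_schrod_PN_le[OF \<phi>m B assms(4) N f g])
    also have "\<dots> \<le> ennreal (((K1 + K2) powr (1/4) * (ln N powr (1/4) * L2_norm_RT f + N powr (1/4) * l4L2_norm g)) ^ 4)"
      using N by (intro ennreal_leI pow4_combination_le) (auto simp: K1_def K2_def zero_le_even_power L2_norm_RT_def l4L2_norm_def)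
    finally show "L4_pow4_TRT (schrod_PN \<phi> N g)
        \<le> ennreal (((K1 + K2) powr (1/4) * (ln N powr (1/4) * L2_norm_RT f + N powr (1/4) * l4L2_norm g)) ^ 4)" .
  qed
qed

end
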